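(* Let $n\in\mathbb{N}$, $\hbar\in{]0,\infty[}$ and $\mu\in{[0,\infty[}$. Then $\mathcal{R}_{\hbar,\mu}=(\mathcal{B}_\hbar)^{++}_{\mathrm H}+\operatorname{supp}\mathcal{R}_{\hbar,\mu}$.
   Context: $\mathscr{P}^{k,\ell}(\mathbb{C}^{1+n})$ is the span of $z^K\overline{z}^L$ ($K,L\in\mathbb{N}_0^{1+n}$, $|K|=k$, $|L|=\ell$, $z^K=\prod z_i^{K_i}$, $K!=\prod K_i!$). Wick product: $f\star_\hbar g=\sum_K\frac{\hbar^{|K|}}{K!}\frac{\partial^{|K|}f}{\partial\overline{z}^K}\frac{\partial^{|K|}g}{\partial z^K}$, involution pointwise complex conjugation. $\mathcal{J}=\sum_jz_j\overline{z_j}$. $\mathcal{B}_\hbar=\bigoplus_k\mathscr{P}^{k,k}(\mathbb{C}^{1+n})$ with $\star_\hbar$; $(\mathcal{B}_\hbar)_{\mathrm H}$ its Hermitian (real-valued) elements and $(\mathcal{B}_\hbar)^{++}_{\mathrm H}$ finite sums $\sum a_j^*\star_\hbar a_j$. Fock space: $\bigoplus_k\mathscr{P}^{k,0}(\mathbb{C}^{1+n})$ with $\langle z^K,z^L\rangle_\hbar=\delta_{K,L}\hbar^{|K|}K!$, $\pi_\hbar(z^K\overline{z}^L)=z^K\hbar^{|L|}\partial^{|L|}/\partial z^L$. $(\mathcal{B}_\hbar)^+_{\mathrm H}$ = Hermitian $f$ with $\langle g,\pi_\hbar(f)g\rangle_\hbar\ge0$ for all $g$. A state on $\mathcal{B}_\hbar$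 is a linear $\omega$ with $\omega(\mathbb{1})=1$, real on Hermitian, $\ge0$ on $(\mathcal{B}_\hbar)^+_{\mathrm H}$. $\mathcal{R}_{\hbar,\mu}$ = Hermitian $f\in\mathcal{B}_\hbar$ with $\omega(f)\ge0$ for all states with $\omega((\mathcal{J}-\mu\mathbb{1})\star_\hbar(\mathcal{J}-\mu\mathbb{1}))=0$. $\operatorname{supp}Q=Q\cap(-Q)$. *)

theory Defs
  imports Complex_Main "HOL-Library.Complex_Order"
begin

text \<open>Coordinates of \<open>C^(1+n)\<close> are indexed by a finite (nonempty) type 'i with
  CARD('i) = 1 + n.  A polynomial in z and zbar
  is represented by its coefficient function: f (K, L) is the coefficient of z^K zbar^L.
  A Fock space vector (polynomial in z only) is a coefficient function K \<mapsto> g K.\<close>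

type_synonym 'i mi = "'i \<Rightarrow> nat"
type_synonym 'i pol = "'i mi \<times> 'i mi \<Rightarrow> complex"
type_synonym 'i fock = "'i mi \<Rightarrow> complex"

definition mabs :: "'i::finite mi \<Rightarrow> nat" where
  "mabs K = (\<Sum>i\<in>UNIV. K i)"

definition mfact :: "'i::finite mi \<Rightarrow> nat" where
  "mfact K = (\<Prod>i\<in>UNIV. fact (K i))"

definition padd :: "('a \<Rightarrow> complex) \<Rightarrow> ('a \<Rightarrow> complex) \<Rightarrow> 'a \<Rightarrow> complex" where
  "padd f g = (\<lambda>p. f p + g p)"
definition psmult :: "complex \<Rightarrow> ('a \<Rightarrow> complex) \<Rightarrow> 'a \<Rightarrow> complex" where
  "psmult c f = (\<lambda>p. c * f p)"
definition pneg :: "('a \<Rightarrow> complex) \<Rightarrow> 'a \<Rightarrow> complex" where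
  "pneg f = (\<lambda>p. - f p)"

definition setsum :: "('a \<Rightarrow> complex) set \<Rightarrow> ('a \<Rightarrow> complex) set \<Rightarrow> ('a \<Rightarrow> complex) set" where
  "setsum A B = {padd a b | a b. a \<in> A \<and> b \<in> B}"

definition csupp :: "('a \<Rightarrow> complex) set \<Rightarrow> ('a \<Rightarrow> complex) set" where
  "csupp Q = Q \<inter> (pneg ` Q)"

definition Bset :: "'i::finite pol set" where
  "Bset = {f. finite {p. f p \<noteq> 0} \<and> (\<forall>K L. f (K, L) \<noteq> 0 \<longrightarrow> mabs K = mabs L)}"

text \<open>Unit 1 and the polynomial J = sum_j z_j zbar_j.\<close>
definition pone :: "'i::finite pol" where
  "pone = (\<lambda>(K, L). if K = (\<lambda>_. 0) \<and> L = (\<lambda>_. 0) then 1 else 0)"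

definition Jpol :: "'i::finite pol" where
  "Jpol = (\<lambda>(K, L). if \<exists>j. K = (\<lambda>i. if i = j then 1 else 0) \<and> L = K then 1 else 0)"

text \<open>Involution: pointwise complex conjugation of the polynomial function;
  conj(sum a_{K,L} z^K zbar^L) = sum conj(a_{K,L}) z^L zbar^K.\<close>
definition pstar :: "'i::finite pol \<Rightarrow> 'i pol" where
  "pstar f = (\<lambda>(K, L). cnj (f (L, K)))"

definition hermitian :: "'i::finite pol \<Rightarrow> bool" where
  "hermitian f \<longleftrightarrow> pstar f = f"

text \<open>Pointwise product of polynomials (Cauchy product of coefficients).\<close>
definition pmult :: "'i::finite pol \<Rightarrow> 'i pol \<Rightarrow> 'i pol" where
  "pmult f g = (\<lambda>(P, Q). \<Sum>(A, B) \<in> {(A, B). A \<le> P \<and> B \<le> Q}.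
      f (A, B) * g (\<lambda>i. P i - A i, \<lambda>i. Q i - B i))"

text \<open>Partial derivatives: d^K/dz^K (z^(A+K) zbar^B) = (A+K)!/A! z^A zbar^B, and similarly in zbar.\<close>
definition dz :: "'i::finite mi \<Rightarrow> 'i pol \<Rightarrow> 'i pol" where
  "dz K f = (\<lambda>(A, B). of_real (\<Prod>i\<in>UNIV. fact (A i + K i) / fact (A i)) * f (\<lambda>i. A i + K i, B))"

definition dzbar :: "'i::finite mi \<Rightarrow> 'i pol \<Rightarrow> 'i pol" where
  "dzbar L f = (\<lambda>(A, B). of_real (\<Prod>i\<in>UNIV. fact (B i + L i) / fact (B i)) * f (A, \<lambda>i. B i + L i))"

text \<open>Wick product: f \<star> g = sum_K hbar^|K|/K! (d^K f/dzbar^K) (d^K g/dz^K).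
  Only finitely many K contribute (those with K \<le> B for some (A,B) in the support of f).\<close>
definition wick :: "real \<Rightarrow> 'i::finite pol \<Rightarrow> 'i pol \<Rightarrow> 'i pol" where
  "wick h f g = (\<lambda>p. \<Sum>K \<in> {K. \<exists>A B. f (A, B) \<noteq> 0 \<and> K \<le> B}.
      of_real (h ^ mabs K / real (mfact K)) * pmult (dzbar K f) (dz K g) p)"

definition Bpp :: "real \<Rightarrow> 'i::finite pol set" where
  "Bpp h = {f. \<exists>as. set as \<subseteq> Bset \<and>
      f = foldr (\<lambda>a s. padd (wick h (pstar a) a) s) as (\<lambda>_. 0)}"

text \<open>Fock space: polynomials in z, inner product <z^K, z^L> = delta_{KL} hbar^|K| K!.\<close>
definition Fock :: "'i::finite fock set" where
  "Fock = {g. finite {K. g K \<noteq> 0}}"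

definition finner :: "real \<Rightarrow> 'i::finite fock \<Rightarrow> 'i fock \<Rightarrow> complex" where
  "finner h g g' = (\<Sum>K \<in> {K. g K \<noteq> 0}. cnj (g K) * g' K * of_real (h ^ mabs K * real (mfact K)))"

definition fdz :: "'i::finite mi \<Rightarrow> 'i fock \<Rightarrow> 'i fock" where
  "fdz L g = (\<lambda>C. of_real (\<Prod>i\<in>UNIV. fact (C i + L i) / fact (C i)) * g (\<lambda>i. C i + L i))"

definition fzmult :: "'i::finite mi \<Rightarrow> 'i fock \<Rightarrow> 'i fock" where
  "fzmult K g = (\<lambda>P. if K \<le> P then g (\<lambda>i. P i - K i) else 0)"

text \<open>pi_hbar (z^K zbar^L) = z^K hbar^|L| d^|L|/dz^L, extended linearly.\<close>
definition piop :: "real \<Rightarrow> 'i::finite pol \<Rightarrow> 'i fock \<Rightarrow> 'i fock" where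
  "piop h f g = (\<lambda>P. \<Sum>(K, L) \<in> {p. f p \<noteq> 0}.
      f (K, L) * of_real (h ^ mabs L) * fzmult K (fdz L g) P)"

definition Bplus :: "real \<Rightarrow> 'i::finite pol set" where
  "Bplus h = {f \<in> Bset. hermitian f \<and> (\<forall>g \<in> Fock. 0 \<le> finner h g (piop h f g))}"

definition is_state :: "real \<Rightarrow> ('i::finite pol \<Rightarrow> complex) \<Rightarrow> bool" where
  "is_state h \<omega> \<longleftrightarrow>
     (\<forall>f \<in> Bset. \<forall>g \<in> Bset. \<omega> (padd f g) = \<omega> f + \<omega> g) \<and>
     (\<forall>f \<in> Bset. \<forall>c. \<omega> (psmult c f) = c * \<omega> f) \<and>
     \<omega> pone = 1 \<and>
     (\<forall>f \<in> Bset. hermitian f \<longrightarrow> \<omega> f \<in> \<real>) \<and>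
     (\<forall>f \<in> Bplus h. 0 \<le> \<omega> f)"

definition Rset :: "real \<Rightarrow> real \<Rightarrow> 'i::finite pol set" where
  "Rset h \<mu> = {f \<in> Bset. hermitian f \<and>
     (\<forall>\<omega>. is_state h \<omega> \<and>
        \<omega> (wick h (padd Jpol (psmult (- of_real \<mu>) pone)) (padd Jpol (psmult (- of_real \<mu>) pone))) = 0
        \<longrightarrow> 0 \<le> \<omega> f)}"

end

theory Submission
  imports Defs "HOL-Library.Function_Algebras" "HOL-Library.FuncSet"
begin

text \<open>The Fock representation \<open>\<pi>\<close> is a faithful *-representation of the Wick algebra (Wick's
  theorem for normally ordered monomials), and \<open>\<pi>(J)\<close> is \<open>h\<close> times the number operator.
  Given \<open>f \<in> R\<close>, normalized vectors in the eigenspace \<open>{|P| = \<mu>/h}\<close> define states with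
  \<open>\<omega>((J - \<mu>)\<^sup>2) = 0\<close>, so the compression of \<open>\<pi>(f)\<close> to this finite-dimensional space is
  positive semidefinite. Its Cholesky decomposition is a sum of rank-one forms, each the
  compression of a square \<open>a\<^sup>* \<star> a\<close>; let \<open>p\<close> be their sum. Then \<open>s = f - p\<close> has zero
  compression. Off the eigenspace \<open>|h |P| - \<mu>|\<close> is bounded below, so
  \<open>\<pm>s + C (J - \<mu>)\<^sup>2\<^sup>e\<close> is positive for suitable \<open>C\<close> and \<open>e\<close>; and by Cauchy--Schwarz every state
  with \<open>\<omega>((J - \<mu>)\<^sup>2) = 0\<close> vanishes on \<open>(J - \<mu>)\<^sup>2\<^sup>e\<close>. Hence \<open>\<omega>(s) = 0\<close> for all such states,
  i.e. \<open>s \<in> supp R\<close>, and \<open>f = p + s\<close>.\<close>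

section \<open>Multi-indices and monomials\<close>

abbreviation fin_supp :: "('a \<Rightarrow> complex) \<Rightarrow> bool" where
  "fin_supp f \<equiv> finite {p. f p \<noteq> 0}"

definition monom :: "'a \<Rightarrow> 'a \<Rightarrow> complex" where
  "monom p = (\<lambda>q. if q = p then 1 else 0)"

lemma fin_supp_monom: "fin_supp (monom p)"
  by (simp add: monom_def)

lemma sum_monom_expansion:
  assumes "finite F" "{p. f p \<noteq> 0} \<subseteq> F"
  shows "(\<Sum>p\<in>F. f p * monom p q) = f q"
proof -
  have "(\<Sum>p\<in>F. f p * monom p q) = (\<Sum>p\<in>F. if p = q then f q else 0)"
    by (rule sum.cong) (auto simp: monom_def)
  also have "\<dots> = f q" using assms by (auto simp: sum.delta')
  finally show ?thesis .
qed

lemma finite_mi_box: "finite {A::'i::finite mi. A \<le> P}"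
proof -
  have "{A::'i mi. A \<le> P} \<subseteq> PiE UNIV (\<lambda>i. {..P i})" by (auto simp: le_fun_def)
  thus ?thesis by (rule finite_subset) (simp add: finite_PiE)
qed

lemma finite_mi_box2: "finite {(A::'i::finite mi, B::'i mi). A \<le> P \<and> B \<le> Q}"
proof -
  have "{(A::'i mi, B::'i mi). A \<le> P \<and> B \<le> Q} = {A. A \<le> P} \<times> {B. B \<le> Q}" by auto
  thus ?thesis by (simp add: finite_mi_box)
qed

lemma mabs_add: "mabs (A + B) = mabs A + mabs B"
  by (simp add: mabs_def sum.distrib)

lemma mabs_diff: "K \<le> B \<Longrightarrow> mabs (B - K) + mabs K = mabs B"
  unfolding mabs_def by (subst sum.distrib[symmetric]) (auto intro!: sum.cong simp: le_fun_def)

lemma mabs_eq_0_iff: "mabs K = 0 \<longleftrightarrow> K = 0"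
  by (auto simp: mabs_def fun_eq_iff)

lemma le_mabs: "K i \<le> mabs K"
  unfolding mabs_def by (rule member_le_sum) auto

lemma mi_le_mabs_eq: "L' \<le> L \<Longrightarrow> mabs L' = mabs L \<Longrightarrow> L' = L"
  using mabs_diff[of L' L] by (auto simp: mabs_eq_0_iff fun_eq_iff le_fun_def intro: le_antisym)

definition level :: "nat \<Rightarrow> 'i::finite mi set" where
  "level m = {L. mabs L = m}"

lemma finite_level: "finite (level m)"
proof -
  have "level m \<subseteq> {L. L \<le> (\<lambda>_. m)}" by (auto simp: level_def le_fun_def le_mabs)
  thus ?thesis using finite_mi_box by (rule finite_subset)
qed

section \<open>The Wick product of monomials\<close>

lemma dzbar_apply: "dzbar K f (A, B) = of_real (\<Prod>i\<in>UNIV. fact (B i + K i) / fact (B i)) * f (A, B + K)"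
  by (simp add: dzbar_def plus_fun_def)

lemma dz_apply: "dz K f (A, B) = of_real (\<Prod>i\<in>UNIV. fact (A i + K i) / fact (A i)) * f (A + K, B)"
  by (simp add: dz_def plus_fun_def)

lemma pmult_apply:
  "pmult f g (P, Q) = (\<Sum>(A, B) \<in> {(A, B). A \<le> P \<and> B \<le> Q}. f (A, B) * g (P - A, Q - B))"
  by (simp add: pmult_def fun_diff_def)

lemma dzbar_sum: "dzbar K (\<lambda>q. \<Sum>p\<in>F. a p * \<phi> p q) r = (\<Sum>p\<in>F. a p * dzbar K (\<phi> p) r)"
  by (cases r) (simp add: dzbar_apply sum_distrib_right mult_ac)

lemma dz_sum: "dz K (\<lambda>q. \<Sum>p\<in>F. a p * \<phi> p q) r = (\<Sum>p\<in>F. a p * dz K (\<phi> p) r)"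
  by (cases r) (simp add: dz_apply sum_distrib_right mult_ac)

lemma pmult_sum:
  "pmult (\<lambda>q. \<Sum>p\<in>F. a p * \<phi> p q) (\<lambda>q. \<Sum>p'\<in>G. b p' * \<psi> p' q) r
   = (\<Sum>p\<in>F. \<Sum>p'\<in>G. a p * b p' * pmult (\<phi> p) (\<psi> p') r)"
proof (cases r)
  case (Pair P Q)
  let ?X = "{(A, B). A \<le> P \<and> B \<le> Q}"
  have "pmult (\<lambda>q. \<Sum>p\<in>F. a p * \<phi> p q) (\<lambda>q. \<Sum>p'\<in>G. b p' * \<psi> p' q) r
     = (\<Sum>x\<in>?X. \<Sum>p\<in>F. \<Sum>p'\<in>G. a p * b p' * (\<phi> p x * \<psi> p' (P - fst x, Q - snd x)))"
    unfolding Pair pmult_apply by (auto intro!: sum.cong simp: sum_product mult_ac)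
  also have "\<dots> = (\<Sum>p\<in>F. \<Sum>p'\<in>G. \<Sum>x\<in>?X. a p * b p' * (\<phi> p x * \<psi> p' (P - fst x, Q - snd x)))"
    by (subst sum.swap, rule sum.cong[OF refl], rule sum.swap)
  also have "\<dots> = (\<Sum>p\<in>F. \<Sum>p'\<in>G. a p * b p' * pmult (\<phi> p) (\<psi> p') r)"
    unfolding Pair pmult_apply by (intro sum.cong refl) (auto simp: sum_distrib_left split_def)
  finally show ?thesis .
qed

definition wick_indices :: "'i::finite pol \<Rightarrow> 'i mi set" where
  "wick_indices f = {K. \<exists>A B. f (A, B) \<noteq> 0 \<and> K \<le> B}"

definition wick_term :: "real \<Rightarrow> 'i::finite pol \<Rightarrow> 'i pol \<Rightarrow> 'i mi \<Rightarrow> 'i mi \<times> 'i mi \<Rightarrow> complex" where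
  "wick_term h f g K p = of_real (h ^ mabs K / real (mfact K)) * pmult (dzbar K f) (dz K g) p"

lemma wick_term_eq_0:
  assumes "K \<notin> wick_indices f"
  shows "wick_term h f g K p = 0"
proof -
  have "dzbar K f = (\<lambda>_. 0)"
  proof
    fix x :: "'a mi \<times> 'a mi"
    obtain A B where x: "x = (A, B)" by (cases x)
    have "K \<le> B + K" by (simp add: le_fun_def)
    hence "f (A, B + K) = 0" using assms by (auto simp: wick_indices_def)
    thus "dzbar K f x = 0" by (simp add: x dzbar_apply)
  qed
  thus ?thesis by (cases p) (simp add: wick_term_def pmult_apply)
qed

lemma wick_eq_sum_wick_term:
  assumes "finite T" "wick_indices f \<subseteq> T"
  shows "wick h f g p = (\<Sum>K\<in>T. wick_term h f g K p)"
proof -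
  have "wick h f g p = (\<Sum>K\<in>wick_indices f. wick_term h f g K p)"
    by (simp add: wick_def wick_term_def wick_indices_def)
  also have "\<dots> = (\<Sum>K\<in>T. wick_term h f g K p)"
    using assms by (intro sum.mono_neutral_left) (auto simp: wick_term_eq_0)
  finally show ?thesis .
qed

lemma wick_indices_monom: "wick_indices (monom (A, B)) = {K. K \<le> B}"
  by (auto simp: wick_indices_def monom_def)

lemma wick_expansion:
  assumes F: "finite F" "{p. f p \<noteq> 0} \<subseteq> F" and G: "finite G" "{p. g p \<noteq> 0} \<subseteq> G"
  shows "wick h f g r = (\<Sum>p\<in>F. \<Sum>q\<in>G. f p * g q * wick h (monom p) (monom q) r)"
proof -
  define T where "T = (\<Union>p\<in>F. {K. K \<le> snd p})"
  have T: "finite T" using F finite_mi_box by (auto simp: T_def)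
  have fT: "wick_indices f \<subseteq> T" using F by (force simp: wick_indices_def T_def)
  have pT: "wick_indices (monom p) \<subseteq> T" if "p \<in> F" for p
    using that by (cases p) (force simp: wick_indices_monom T_def)
  have dzbar_f: "dzbar K f = (\<lambda>x. \<Sum>p\<in>F. f p * dzbar K (monom p) x)" for K
    using dzbar_sum[of K f "\<lambda>p. monom p" F] by (simp add: sum_monom_expansion F fun_eq_iff)
  have dz_g: "dz K g = (\<lambda>x. \<Sum>q\<in>G. g q * dz K (monom q) x)" for K
    using dz_sum[of K g "\<lambda>q. monom q" G] by (simp add: sum_monom_expansion G fun_eq_iff)
  have "wick h f g r = (\<Sum>K\<in>T. wick_term h f g K r)" by (rule wick_eq_sum_wick_term[OF T fT])
  also have "\<dots> = (\<Sum>K\<in>T. \<Sum>p\<in>F. \<Sum>q\<in>G. f p * g q * wick_term h (monom p) (monom q) K r)"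
    by (simp add: wick_term_def dzbar_f dz_g pmult_sum sum_distrib_left mult_ac)
  also have "\<dots> = (\<Sum>p\<in>F. \<Sum>q\<in>G. \<Sum>K\<in>T. f p * g q * wick_term h (monom p) (monom q) K r)"
    by (subst sum.swap, rule sum.cong[OF refl], rule sum.swap)
  also have "\<dots> = (\<Sum>p\<in>F. \<Sum>q\<in>G. f p * g q * wick h (monom p) (monom q) r)"
    by (intro sum.cong refl) (simp add: sum_distrib_left[symmetric] wick_eq_sum_wick_term[OF T pT])
  finally show ?thesis .
qed

definition mfalling :: "'i::finite mi \<Rightarrow> 'i mi \<Rightarrow> real" where
  "mfalling B K = (\<Prod>i\<in>UNIV. fact (B i) / fact (B i - K i))"

definition wick_coeff :: "real \<Rightarrow> 'i::finite mi \<Rightarrow> 'i mi \<Rightarrow> 'i mi \<Rightarrow> real" where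
  "wick_coeff h B C K = h ^ mabs K / real (mfact K) * mfalling B K * mfalling C K"

lemma contraction_index_iff:
  fixes A P K C B' Q D :: "'i \<Rightarrow> nat"
  shows "(A \<le> P \<and> B' \<le> Q \<and> P - A + K = C \<and> Q - B' = D) \<longleftrightarrow> (K \<le> C \<and> P = A + (C - K) \<and> Q = B' + D)"
proof -
  have "\<forall>i. (A i \<le> P i \<and> B' i \<le> Q i \<and> P i - A i + K i = C i \<and> Q i - B' i = D i)
      \<longleftrightarrow> (K i \<le> C i \<and> P i = A i + (C i - K i) \<and> Q i = B' i + D i)"
    by (intro allI) arith
  thus ?thesis unfolding le_fun_def fun_eq_iff plus_fun_apply fun_diff_def by blast
qed

lemma pmult_dzbar_dz_monom:
  fixes A B C D P Q K :: "'i::finite mi"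
  assumes KB: "K \<le> B"
  shows "pmult (dzbar K (monom (A, B))) (dz K (monom (C, D))) (P, Q)
    = of_real (mfalling B K * mfalling C K) * (if K \<le> C \<and> P = A + (C - K) \<and> Q = (B - K) + D then 1 else 0)"
proof -
  let ?X = "{(A', B'). A' \<le> P \<and> B' \<le> Q}"
  let ?t = "\<lambda>(A', B'). dzbar K (monom (A, B)) (A', B') * dz K (monom (C, D)) (P - A', Q - B')"
  have eqB: "(B' + K = B) \<longleftrightarrow> B' = B - K" for B' :: "'i mi"
  proof -
    have "\<forall>i. (B' i + K i = B i) \<longleftrightarrow> B' i = B i - K i" using KB by (auto simp: le_fun_def)
    thus ?thesis unfolding fun_eq_iff plus_fun_apply fun_diff_def by blast
  qed
  have BK: "B - K + K = B" using KB by (simp add: le_fun_def fun_eq_iff)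
  have mfalling_B: "(\<Prod>i\<in>UNIV. fact ((B - K) i + K i) / fact ((B - K) i)) = mfalling B K"
    unfolding mfalling_def using KB by (intro prod.cong refl) (simp add: le_fun_def)
  have "pmult (dzbar K (monom (A, B))) (dz K (monom (C, D))) (P, Q) = (\<Sum>x\<in>?X. ?t x)"
    by (simp add: pmult_apply)
  also have "\<dots> = (\<Sum>x\<in>?X. if x = (A, B - K) then ?t (A, B - K) else 0)"
    by (rule sum.cong) (auto simp: dzbar_apply monom_def eqB split: if_splits)
  also have "\<dots> = (if (A, B - K) \<in> ?X then ?t (A, B - K) else 0)"
    using finite_mi_box2[of P Q] by (simp add: sum.delta')
  also have "\<dots> = of_real (mfalling B K * mfalling C K) *
      (if K \<le> C \<and> P = A + (C - K) \<and> Q = (B - K) + D then 1 else 0)"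
  proof (cases "K \<le> C \<and> P = A + (C - K) \<and> Q = (B - K) + D")
    case True
    hence PA: "P - A = C - K" and QB: "Q - (B - K) = D" by (auto simp: fun_eq_iff)
    have mfalling_C: "(\<Prod>i\<in>UNIV. fact ((C - K) i + K i) / fact ((C - K) i)) = mfalling C K"
      unfolding mfalling_def using True by (intro prod.cong refl) (simp add: le_fun_def)
    have CK: "C - K + K = C" using True by (simp add: le_fun_def fun_eq_iff)
    have "A \<le> A + (C - K)" "B - K \<le> B - K + D" by (simp_all add: le_fun_def)
    hence "(A, B - K) \<in> ?X" using True by simp
    moreover have "?t (A, B - K) = of_real (mfalling B K * mfalling C K)"
      by (simp only: dzbar_apply dz_apply split mfalling_B PA mfalling_C BK QB CK) (simp add: monom_def)
    ultimately show ?thesis using True by simp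
  next
    case False
    hence "\<not> (A \<le> P \<and> B - K \<le> Q \<and> P - A + K = C \<and> Q - (B - K) = D)"
      using contraction_index_iff[of A P "B - K" Q K C D] by simp
    thus ?thesis using False by (auto simp: dzbar_apply dz_apply monom_def BK)
  qed
  finally show ?thesis .
qed

lemma wick_monom:
  fixes A B C D P Q :: "'i::finite mi"
  shows "wick h (monom (A, B)) (monom (C, D)) (P, Q) =
     (\<Sum>K\<in>{K. K \<le> B}. of_real (wick_coeff h B C K) *
        (if K \<le> C \<and> P = A + (C - K) \<and> Q = (B - K) + D then 1 else 0))"
proof -
  have "wick h (monom (A, B)) (monom (C, D)) (P, Q)
      = (\<Sum>K\<in>{K. K \<le> B}. wick_term h (monom (A, B)) (monom (C, D)) K (P, Q))"
    by (rule wick_eq_sum_wick_term) (auto simp: finite_mi_box wick_indices_monom)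
  also have "\<dots> = (\<Sum>K\<in>{K. K \<le> B}. of_real (wick_coeff h B C K) *
        (if K \<le> C \<and> P = A + (C - K) \<and> Q = (B - K) + D then 1 else 0))"
    by (rule sum.cong) (auto simp: wick_term_def pmult_dzbar_dz_monom wick_coeff_def)
  finally show ?thesis .
qed

lemma wick_monom_support:
  fixes A B C D :: "'i::finite mi"
  shows "{r. wick h (monom (A, B)) (monom (C, D)) r \<noteq> 0} \<subseteq> (\<lambda>K. (A + (C - K), B - K + D)) ` {K. K \<le> B}"
proof
  fix r assume "r \<in> {r. wick h (monom (A, B)) (monom (C, D)) r \<noteq> 0}"
  then obtain P Q where r: "r = (P, Q)" and nz: "wick h (monom (A, B)) (monom (C, D)) (P, Q) \<noteq> 0"
    by (cases r) auto
  from nz obtain K where "K \<in> {K. K \<le> B}" "of_real (wick_coeff h B C K) *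
      (if K \<le> C \<and> P = A + (C - K) \<and> Q = (B - K) + D then 1 else 0) \<noteq> (0::complex)"
    unfolding wick_monom by (rule sum.not_neutral_contains_not_neutral)
  thus "r \<in> (\<lambda>K. (A + (C - K), B - K + D)) ` {K. K \<le> B}" using r by (auto split: if_splits)
qed

lemma fin_supp_wick_monom: "fin_supp (wick h (monom p) (monom (q :: 'i::finite mi \<times> 'i mi)))"
  using finite_subset[OF wick_monom_support[of h "fst p" "snd p" "fst q" "snd q"]] by (simp add: finite_mi_box)

lemma wick_support_subset:
  assumes "fin_supp f" "fin_supp g"
  shows "{r. wick h f g r \<noteq> 0} \<subseteq>
    (\<Union>p\<in>{p. f p \<noteq> 0}. \<Union>q\<in>{q. g q \<noteq> 0}. {r. wick h (monom p) (monom q) r \<noteq> 0})"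
proof
  let ?F = "{p. f p \<noteq> 0}" and ?G = "{q. g q \<noteq> 0}"
  fix r assume "r \<in> {r. wick h f g r \<noteq> 0}"
  hence "(\<Sum>p\<in>?F. \<Sum>q\<in>?G. f p * g q * wick h (monom p) (monom q) r) \<noteq> 0"
    using wick_expansion[of ?F f ?G g h r] assms by simp
  then obtain p where p: "p \<in> ?F" "(\<Sum>q\<in>?G. f p * g q * wick h (monom p) (monom q) r) \<noteq> 0"
    by (rule sum.not_neutral_contains_not_neutral)
  from p(2) obtain q where q: "q \<in> ?G" "f p * g q * wick h (monom p) (monom q) r \<noteq> 0"
    by (rule sum.not_neutral_contains_not_neutral)
  hence "wick h (monom p) (monom q) r \<noteq> 0" by simp
  thus "r \<in> (\<Union>p\<in>?F. \<Union>q\<in>?G. {r. wick h (monom p) (monom q) r \<noteq> 0})" using p(1) q(1) by blast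
qed

lemma fin_supp_wick: "fin_supp f \<Longrightarrow> fin_supp g \<Longrightarrow> fin_supp (wick h f g)"
  by (rule finite_subset[OF wick_support_subset]) (auto simp: fin_supp_wick_monom)

section \<open>The Fock representation\<close>

definition pi_monom :: "real \<Rightarrow> 'i::finite mi \<Rightarrow> 'i mi \<Rightarrow> 'i fock \<Rightarrow> 'i fock" where
  "pi_monom h K L u = (\<lambda>P. of_real (h ^ mabs L) * fzmult K (fdz L u) P)"

lemma pi_monom_apply:
  "pi_monom h K L u P = (if K \<le> P then
     of_real (h ^ mabs L * (\<Prod>i\<in>UNIV. fact ((P - K) i + L i) / fact ((P - K) i))) * u (P - K + L) else 0)"
  by (simp add: pi_monom_def fzmult_def fdz_def plus_fun_def fun_diff_def)

lemma pi_monom_sum: "pi_monom h K L (\<lambda>R. \<Sum>q\<in>G. c q * v q R) P = (\<Sum>q\<in>G. c q * pi_monom h K L (v q) P)"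
  by (simp add: pi_monom_apply sum_distrib_left sum_distrib_right mult_ac)

lemma piop_eq_sum_pi_monom: "piop h f u P = (\<Sum>p\<in>{p. f p \<noteq> 0}. f p * pi_monom h (fst p) (snd p) u P)"
  unfolding piop_def pi_monom_def by (intro sum.cong refl) (auto simp: mult_ac)

lemma piop_eq_sum_superset:
  assumes "finite F" "{p. f p \<noteq> 0} \<subseteq> F"
  shows "piop h f u P = (\<Sum>p\<in>F. f p * pi_monom h (fst p) (snd p) u P)"
  unfolding piop_eq_sum_pi_monom using assms by (intro sum.mono_neutral_left) auto

definition contraction_factor :: "nat \<Rightarrow> nat \<Rightarrow> nat \<Rightarrow> nat \<Rightarrow> nat \<Rightarrow> real" where
  "contraction_factor b c x d k =
     real (b choose k) * real (x choose (c - k)) * fact c * fact (x + b - c + d) / fact x"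

lemma contraction_factor_eq:
  assumes "k \<le> b" "k \<le> c" "c - k \<le> x"
  shows "1 / fact k * (fact b / fact (b - k)) * (fact c / fact (c - k))
      * (fact (x - (c - k) + (b - k + d)) / fact (x - (c - k))) = contraction_factor b c x d k"
proof -
  have e1: "x - (c - k) + (b - k + d) = x + b - c + d" using assms by simp
  have b1: "real (b choose k) = fact b / (fact k * fact (b - k))" using assms by (simp add: binomial_fact)
  have b2: "real (x choose (c - k)) = fact x / (fact (c - k) * fact (x - (c - k)))"
    using assms by (simp add: binomial_fact)
  show ?thesis unfolding contraction_factor_def e1 b1 b2 by (simp add: field_simps)
qed

text \<open>Vandermonde's identity is what makes the sum over all contractions factorize.\<close>

lemma sum_contraction_factor:
  "(\<Sum>k\<le>c. contraction_factor b c x d k) = (if c \<le> x + b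
     then fact (x + b) / fact x * (fact (x + b - c + d) / fact (x + b - c)) else 0)"
proof -
  have "(\<Sum>k\<le>c. contraction_factor b c x d k)
      = real (\<Sum>k\<le>c. (b choose k) * (x choose (c - k))) * fact c * fact (x + b - c + d) / fact x"
    by (simp add: contraction_factor_def sum_distrib_right sum_divide_distrib)
  also have "(\<Sum>k\<le>c. (b choose k) * (x choose (c - k))) = (b + x) choose c" by (rule vandermonde)
  finally have eq: "(\<Sum>k\<le>c. contraction_factor b c x d k)
      = real ((b + x) choose c) * fact c * fact (x + b - c + d) / fact x" .
  show ?thesis
  proof (cases "c \<le> x + b")
    case True
    hence binom: "real ((b + x) choose c) = fact (x + b) / (fact c * fact (x + b - c))"
      by (simp add: binomial_fact add.commute)
    have "real ((b + x) choose c) * fact c * fact (x + b - c + d) / fact x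
       = fact (x + b) / fact x * (fact (x + b - c + d) / fact (x + b - c))"
      unfolding binom by (simp add: field_simps)
    thus ?thesis using True eq by simp
  qed (simp add: eq)
qed

lemma wick_coeff_contraction_factor:
  fixes B C D K X :: "'i::finite mi"
  assumes KB: "K \<le> B" and KC: "K \<le> C" and CKX: "C - K \<le> X"
  shows "wick_coeff h B C K * (h ^ mabs (B - K + D) *
      (\<Prod>i\<in>UNIV. fact ((X - (C - K)) i + (B - K + D) i) / fact ((X - (C - K)) i)))
    = h ^ (mabs B + mabs D) * (\<Prod>i\<in>UNIV. contraction_factor (B i) (C i) (X i) (D i) (K i))"
proof -
  have hh: "h ^ mabs K * h ^ mabs (B - K + D) = h ^ (mabs B + mabs D)"
    using mabs_diff[OF KB] by (simp add: mabs_add power_add[symmetric] add.commute add.left_commute)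
  have "wick_coeff h B C K * (h ^ mabs (B - K + D) *
      (\<Prod>i\<in>UNIV. fact ((X - (C - K)) i + (B - K + D) i) / fact ((X - (C - K)) i)))
    = h ^ mabs K * h ^ mabs (B - K + D) * (\<Prod>i\<in>UNIV. 1 / fact (K i) * (fact (B i) / fact (B i - K i))
      * (fact (C i) / fact (C i - K i)) * (fact (X i - (C i - K i) + (B i - K i + D i)) / fact (X i - (C i - K i))))"
    by (simp add: wick_coeff_def mfalling_def mfact_def prod.distrib prod_dividef field_simps)
  also have "\<dots> = h ^ (mabs B + mabs D) * (\<Prod>i\<in>UNIV. contraction_factor (B i) (C i) (X i) (D i) (K i))"
    unfolding hh using KB KC CKX
    by (intro arg_cong2[where f = "(*)"] refl prod.cong contraction_factor_eq) (auto simp: le_fun_def)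
  finally show ?thesis .
qed

lemma pi_monom_contraction_term:
  fixes A B C D P K :: "'i::finite mi"
  assumes AP: "A \<le> P" and KC: "K \<le> C"
  defines "X \<equiv> P - A"
  shows "(if K \<le> B then of_real (wick_coeff h B C K) * pi_monom h (A + (C - K)) (B - K + D) u P else 0)
     = of_real (h ^ (mabs B + mabs D) *
         (\<Prod>i\<in>UNIV. contraction_factor (B i) (C i) (X i) (D i) (K i))) * u (X + B - C + D)"
proof (cases "K \<le> B \<and> C - K \<le> X")
  case True
  hence KB: "K \<le> B" and CKX: "C - K \<le> X" by auto
  have le: "A + (C - K) \<le> P"
  proof (unfold le_fun_def, intro allI)
    fix i
    have "C i - K i \<le> P i - A i" "A i \<le> P i" using CKX AP by (auto simp: le_fun_def X_def)
    thus "(A + (C - K)) i \<le> P i" by simp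
  qed
  have e1: "P - (A + (C - K)) = X - (C - K)" by (auto simp: X_def fun_eq_iff)
  have e2: "X - (C - K) + (B - K + D) = X + B - C + D"
  proof
    fix i
    have "K i \<le> B i" "K i \<le> C i" "C i - K i \<le> X i" using KB KC CKX by (auto simp: le_fun_def)
    thus "(X - (C - K) + (B - K + D)) i = (X + B - C + D) i" by simp
  qed
  show ?thesis using le KB
    by (simp only: pi_monom_apply e1 e2 if_True wick_coeff_contraction_factor[OF KB KC CKX, symmetric]
        of_real_mult mult.assoc)
next
  case False
  then obtain i where i: "\<not> K i \<le> B i \<or> \<not> C i - K i \<le> X i" by (auto simp: le_fun_def)
  hence "contraction_factor (B i) (C i) (X i) (D i) (K i) = 0" by (auto simp: contraction_factor_def)
  hence "(\<Prod>i\<in>UNIV. contraction_factor (B i) (C i) (X i) (D i) (K i)) = 0" by (intro prod_zero) auto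
  moreover have "\<not> K \<le> B \<or> \<not> A + (C - K) \<le> P"
  proof -
    have "\<not> K i \<le> B i \<or> \<not> A i + (C i - K i) \<le> P i" using i by (auto simp: X_def)
    thus ?thesis by (auto simp: le_fun_def)
  qed
  ultimately show ?thesis by (auto simp: pi_monom_apply)
qed

lemma pi_monom_pi_monom_apply:
  fixes A B C D P :: "'i::finite mi"
  assumes AP: "A \<le> P"
  defines "X \<equiv> P - A"
  shows "pi_monom h A B (pi_monom h C D u) P = of_real (h ^ (mabs B + mabs D) *
    (\<Prod>i\<in>UNIV. if C i \<le> X i + B i then fact (X i + B i) / fact (X i)
      * (fact (X i + B i - C i + D i) / fact (X i + B i - C i)) else 0)) * u (X + B - C + D)"
proof (cases "C \<le> X + B")
  case True
  have pr: "(\<Prod>i\<in>UNIV. if C i \<le> X i + B i then fact (X i + B i) / fact (X i)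
        * (fact (X i + B i - C i + D i) / fact (X i + B i - C i)) else 0)
      = (\<Prod>i\<in>UNIV. fact (X i + B i) / fact (X i)) * (\<Prod>i\<in>UNIV. fact (X i + B i - C i + D i) / fact (X i + B i - C i))"
    using True by (subst prod.distrib[symmetric]) (auto intro!: prod.cong simp: le_fun_def)
  have r1: "pi_monom h A B v P = of_real (h ^ mabs B * (\<Prod>i\<in>UNIV. fact (X i + B i) / fact (X i))) * v (X + B)" for v
    using AP by (simp add: pi_monom_apply X_def)
  have r2: "pi_monom h C D u (X + B) = of_real (h ^ mabs D *
      (\<Prod>i\<in>UNIV. fact (X i + B i - C i + D i) / fact (X i + B i - C i))) * u (X + B - C + D)"
    using True by (simp add: pi_monom_apply)
  show ?thesis unfolding pr r1 r2 by (simp add: power_add mult_ac del: of_real_prod)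
next
  case False
  then obtain j where j: "\<not> C j \<le> X j + B j" by (auto simp: le_fun_def)
  have "(\<Prod>i\<in>UNIV. if C i \<le> X i + B i then fact (X i + B i) / fact (X i)
      * (fact (X i + B i - C i + D i) / fact (X i + B i - C i)) else 0) = (0::real)"
    by (rule prod_zero) (use j in auto)
  thus ?thesis using AP False by (simp add: pi_monom_apply X_def)
qed

text \<open>Wick's theorem for one pair of monomials: the product of the normally ordered operators
  is the sum over all contractions.\<close>

lemma pi_monom_comp:
  fixes A B C D P :: "'i::finite mi"
  shows "(\<Sum>K\<in>{K. K \<le> C}. if K \<le> B then of_real (wick_coeff h B C K) * pi_monom h (A + (C - K)) (B - K + D) u P else 0)
        = pi_monom h A B (pi_monom h C D u) P"
proof (cases "A \<le> P")
  case False
  have "\<not> A + (C - K) \<le> P" for K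
    using False by (auto simp: le_fun_def intro: order_trans[OF le_add1])
  hence "(\<Sum>K\<in>{K. K \<le> C}. if K \<le> B then of_real (wick_coeff h B C K)
      * pi_monom h (A + (C - K)) (B - K + D) u P else 0) = 0"
    by (intro sum.neutral) (simp add: pi_monom_apply)
  thus ?thesis using False by (simp add: pi_monom_apply)
next
  case AP: True
  define X where "X = P - A"
  define \<phi> where "\<phi> i k = contraction_factor (B i) (C i) (X i) (D i) k" for i k
  have box: "{K. K \<le> C} = PiE UNIV (\<lambda>i. {..C i})"
    by (auto simp: le_fun_def PiE_def Pi_def extensional_def)
  have "(\<Sum>K\<in>{K. K \<le> C}. if K \<le> B then of_real (wick_coeff h B C K) * pi_monom h (A + (C - K)) (B - K + D) u P else 0)
      = of_real (h ^ (mabs B + mabs D) * (\<Sum>K\<in>{K. K \<le> C}. \<Prod>i\<in>UNIV. \<phi> i (K i))) * u (X + B - C + D)"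
    by (simp add: pi_monom_contraction_term[OF AP] X_def \<phi>_def sum_distrib_left sum_distrib_right)
  also have "(\<Sum>K\<in>{K. K \<le> C}. \<Prod>i\<in>UNIV. \<phi> i (K i)) = (\<Prod>i\<in>UNIV. \<Sum>k\<le>C i. \<phi> i k)"
    unfolding box by (simp add: prod_sum_PiE)
  also have "\<dots> = (\<Prod>i\<in>UNIV. if C i \<le> X i + B i then fact (X i + B i) / fact (X i)
      * (fact (X i + B i - C i + D i) / fact (X i + B i - C i)) else 0)"
    unfolding \<phi>_def by (intro prod.cong refl sum_contraction_factor)
  also have "of_real (h ^ (mabs B + mabs D) * \<dots>) * u (X + B - C + D) = pi_monom h A B (pi_monom h C D u) P"
    unfolding X_def by (rule pi_monom_pi_monom_apply[OF AP, symmetric])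
  finally show ?thesis .
qed

lemma piop_wick_monom:
  fixes A B C D :: "'i::finite mi"
  shows "piop h (wick h (monom (A, B)) (monom (C, D))) u P = pi_monom h A B (pi_monom h C D u) P"
proof -
  let ?W = "wick h (monom (A, B)) (monom (C, D))"
  let ?T = "(\<lambda>K. (A + (C - K), B - K + D)) ` {K. K \<le> B}"
  let ?c = "\<lambda>K. if K \<le> C then of_real (wick_coeff h B C K) * pi_monom h (A + (C - K)) (B - K + D) u P else 0"
  have fT: "finite ?T" by (simp add: finite_mi_box)
  have "piop h ?W u P = (\<Sum>r\<in>?T. ?W r * pi_monom h (fst r) (snd r) u P)"
    by (rule piop_eq_sum_superset[OF fT wick_monom_support])
  also have "\<dots> = (\<Sum>K\<in>{K. K \<le> B}. \<Sum>r\<in>?T. of_real (wick_coeff h B C K) *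
        (if K \<le> C \<and> fst r = A + (C - K) \<and> snd r = (B - K) + D then 1 else 0) * pi_monom h (fst r) (snd r) u P)"
    by (subst sum.swap) (auto intro!: sum.cong simp: wick_monom sum_distrib_right split: prod.splits)
  also have "\<dots> = (\<Sum>K\<in>{K. K \<le> B}. ?c K)"
  proof (rule sum.cong[OF refl])
    fix K assume K: "K \<in> {K. K \<le> B}"
    have "(\<Sum>r\<in>?T. of_real (wick_coeff h B C K) *
        (if K \<le> C \<and> fst r = A + (C - K) \<and> snd r = (B - K) + D then 1 else 0) * pi_monom h (fst r) (snd r) u P)
      = (\<Sum>r\<in>?T. if r = (A + (C - K), B - K + D) then ?c K else 0)"
      by (intro sum.cong refl) (auto simp: prod_eq_iff)
    also have "\<dots> = ?c K" using K fT by (simp add: sum.delta')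
    finally show "(\<Sum>r\<in>?T. of_real (wick_coeff h B C K) *
        (if K \<le> C \<and> fst r = A + (C - K) \<and> snd r = (B - K) + D then 1 else 0) * pi_monom h (fst r) (snd r) u P)
      = ?c K" .
  qed
  also have "\<dots> = (\<Sum>K\<in>{K. K \<le> B \<and> K \<le> C}. of_real (wick_coeff h B C K) * pi_monom h (A + (C - K)) (B - K + D) u P)"
    by (subst sum.inter_filter[symmetric]) (auto simp: finite_mi_box)
  also have "\<dots> = (\<Sum>K\<in>{K. K \<le> C}. if K \<le> B then of_real (wick_coeff h B C K) * pi_monom h (A + (C - K)) (B - K + D) u P else 0)"
    by (subst sum.inter_filter[symmetric]) (auto simp: finite_mi_box intro!: sum.cong)
  also have "\<dots> = pi_monom h A B (pi_monom h C D u) P" by (rule pi_monom_comp)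
  finally show ?thesis .
qed

theorem piop_wick:
  assumes f: "fin_supp f" and g: "fin_supp g"
  shows "piop h (wick h f g) u P = piop h f (piop h g u) P"
proof -
  let ?F = "{p. f p \<noteq> 0}" and ?G = "{q. g q \<noteq> 0}"
  let ?W = "\<lambda>p q. wick h (monom p) (monom q)"
  define T where "T = (\<Union>p\<in>?F. \<Union>q\<in>?G. {r. ?W p q r \<noteq> 0})"
  have fT: "finite T" unfolding T_def using f g fin_supp_wick_monom by blast
  have spW: "{r. wick h f g r \<noteq> 0} \<subseteq> T"
    unfolding T_def by (rule wick_support_subset[OF f g])
  have spWpq: "{r. ?W p q r \<noteq> 0} \<subseteq> T" if "p \<in> ?F" "q \<in> ?G" for p q
    using that unfolding T_def by blast
  have "piop h (wick h f g) u P = (\<Sum>r\<in>T. wick h f g r * pi_monom h (fst r) (snd r) u P)"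
    by (rule piop_eq_sum_superset[OF fT spW])
  also have "\<dots> = (\<Sum>r\<in>T. \<Sum>p\<in>?F. \<Sum>q\<in>?G. f p * g q * (?W p q r * pi_monom h (fst r) (snd r) u P))"
    using f g by (simp add: wick_expansion[of ?F f ?G g] sum_distrib_right sum_distrib_left mult_ac)
  also have "\<dots> = (\<Sum>p\<in>?F. \<Sum>q\<in>?G. \<Sum>r\<in>T. f p * g q * (?W p q r * pi_monom h (fst r) (snd r) u P))"
    by (subst sum.swap, rule sum.cong[OF refl], rule sum.swap)
  also have "\<dots> = (\<Sum>p\<in>?F. \<Sum>q\<in>?G. f p * g q * piop h (?W p q) u P)"
    by (intro sum.cong refl) (simp add: sum_distrib_left[symmetric] piop_eq_sum_superset[OF fT spWpq])
  also have "\<dots> = (\<Sum>p\<in>?F. \<Sum>q\<in>?G. f p * g q * pi_monom h (fst p) (snd p) (pi_monom h (fst q) (snd q) u) P)"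
    using piop_wick_monom[of h "fst p" "snd p" "fst q" "snd q" u P for p q] by simp
  also have "\<dots> = piop h f (piop h g u) P"
    unfolding piop_eq_sum_pi_monom[of h f]
    by (simp add: piop_eq_sum_pi_monom[of h g, abs_def] pi_monom_sum sum_distrib_left mult_ac)
  finally show ?thesis .
qed

lemma piop_padd:
  assumes "fin_supp f" "fin_supp g"
  shows "piop h (padd f g) u P = piop h f u P + piop h g u P"
proof -
  let ?F = "{p. f p \<noteq> 0} \<union> {p. g p \<noteq> 0}"
  have "piop h (padd f g) u P = (\<Sum>p\<in>?F. padd f g p * pi_monom h (fst p) (snd p) u P)"
    by (rule piop_eq_sum_superset) (use assms in \<open>auto simp: padd_def\<close>)
  also have "\<dots> = piop h f u P + piop h g u P"
    by (subst (1 2) piop_eq_sum_superset[where F = ?F])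
       (use assms in \<open>auto simp: padd_def distrib_right sum.distrib\<close>)
  finally show ?thesis .
qed

lemma piop_psmult:
  assumes "fin_supp f"
  shows "piop h (psmult c f) u P = c * piop h f u P"
proof -
  let ?F = "{p. f p \<noteq> 0}"
  have "piop h (psmult c f) u P = (\<Sum>p\<in>?F. psmult c f p * pi_monom h (fst p) (snd p) u P)"
    by (rule piop_eq_sum_superset) (use assms in \<open>auto simp: psmult_def\<close>)
  also have "\<dots> = c * piop h f u P"
    by (subst piop_eq_sum_superset[where F = ?F])
       (use assms in \<open>auto simp: psmult_def sum_distrib_left mult_ac\<close>)
  finally show ?thesis .
qed

lemma piop_sum_vector: "piop h f (\<lambda>R. \<Sum>Q\<in>F. c Q * w Q R) P = (\<Sum>Q\<in>F. c Q * piop h f (w Q) P)"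
proof -
  have "piop h f (\<lambda>R. \<Sum>Q\<in>F. c Q * w Q R) P
      = (\<Sum>p\<in>{p. f p \<noteq> 0}. \<Sum>Q\<in>F. f p * (c Q * pi_monom h (fst p) (snd p) (w Q) P))"
    unfolding piop_eq_sum_pi_monom by (simp add: pi_monom_sum sum_distrib_left)
  also have "\<dots> = (\<Sum>Q\<in>F. c Q * piop h f (w Q) P)"
    unfolding piop_eq_sum_pi_monom by (subst sum.swap) (simp add: sum_distrib_left mult_ac)
  finally show ?thesis .
qed

lemma pi_monom_add_vector: "pi_monom h K L (\<lambda>R. u R + v R) P = pi_monom h K L u P + pi_monom h K L v P"
  by (simp add: pi_monom_apply distrib_left)

lemma pi_monom_smult_vector: "pi_monom h K L (\<lambda>R. c * u R) P = c * pi_monom h K L u P"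
  by (simp add: pi_monom_apply mult_ac)

lemma piop_add_vector: "piop h f (\<lambda>R. u R + v R) P = piop h f u P + piop h f v P"
  by (simp add: piop_eq_sum_pi_monom pi_monom_add_vector distrib_left sum.distrib)

lemma piop_smult_vector: "piop h f (\<lambda>R. c * u R) P = c * piop h f u P"
  by (simp add: piop_eq_sum_pi_monom pi_monom_smult_vector sum_distrib_left mult_ac)

lemma pi_monom_support: "{P. pi_monom h K L u P \<noteq> 0} \<subseteq> (\<lambda>Q. K + (Q - L)) ` {Q. u Q \<noteq> 0}"
proof
  fix P assume "P \<in> {P. pi_monom h K L u P \<noteq> 0}"
  hence KP: "K \<le> P" and nz: "u (P - K + L) \<noteq> 0" by (auto simp: pi_monom_apply split: if_splits)
  have "P = K + ((P - K + L) - L)" using KP by (auto simp: fun_eq_iff le_fun_def)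
  thus "P \<in> (\<lambda>Q. K + (Q - L)) ` {Q. u Q \<noteq> 0}" using nz by blast
qed

lemma Fock_pi_monom: "u \<in> Fock \<Longrightarrow> pi_monom h K L u \<in> Fock"
  unfolding Fock_def by (auto intro: finite_subset[OF pi_monom_support])

lemma Fock_piop:
  assumes u: "u \<in> Fock" and f: "fin_supp f"
  shows "piop h f u \<in> Fock"
proof -
  have "{P. piop h f u P \<noteq> 0} \<subseteq> (\<Union>p\<in>{p. f p \<noteq> 0}. {P. pi_monom h (fst p) (snd p) u P \<noteq> 0})"
  proof
    fix P assume "P \<in> {P. piop h f u P \<noteq> 0}"
    hence "piop h f u P \<noteq> 0" by simp
    then obtain p where "p \<in> {p. f p \<noteq> 0}" "f p * pi_monom h (fst p) (snd p) u P \<noteq> 0"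
      unfolding piop_eq_sum_pi_monom by (rule sum.not_neutral_contains_not_neutral)
    thus "P \<in> (\<Union>p\<in>{p. f p \<noteq> 0}. {P. pi_monom h (fst p) (snd p) u P \<noteq> 0})" by (intro UN_I) auto
  qed
  moreover have "finite (\<Union>p\<in>{p. f p \<noteq> 0}. {P. pi_monom h (fst p) (snd p) u P \<noteq> 0})"
    using f Fock_pi_monom[OF u] by (auto simp: Fock_def)
  ultimately show ?thesis unfolding Fock_def by (auto intro: finite_subset)
qed

lemma Fock_add:
  assumes "a \<in> Fock" "b \<in> Fock"
  shows "(\<lambda>K. a K + b K) \<in> Fock"
proof -
  have "{K. a K + b K \<noteq> 0} \<subseteq> {K. a K \<noteq> 0} \<union> {K. b K \<noteq> 0}" by auto
  moreover have "finite ({K. a K \<noteq> 0} \<union> {K. b K \<noteq> 0})" using assms by (simp add: Fock_def)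
  ultimately show ?thesis unfolding Fock_def by (auto intro: finite_subset)
qed

lemma Fock_monom: "monom Q \<in> Fock"
  by (simp add: Fock_def fin_supp_monom)

section \<open>The algebra and its involution\<close>

lemma fin_supp_padd: "fin_supp f \<Longrightarrow> fin_supp g \<Longrightarrow> fin_supp (padd f g)"
  by (rule finite_subset[of _ "{p. f p \<noteq> 0} \<union> {p. g p \<noteq> 0}"]) (auto simp: padd_def)

lemma fin_supp_psmult: "fin_supp f \<Longrightarrow> fin_supp (psmult c f)"
  by (rule finite_subset[of _ "{p. f p \<noteq> 0}"]) (auto simp: psmult_def)

lemma pstar_support: "{p. pstar f p \<noteq> 0} = prod.swap ` {p. f p \<noteq> 0}"
  by (auto simp: pstar_def image_iff split: prod.splits)

lemma fin_supp_pstar: "fin_supp f \<Longrightarrow> fin_supp (pstar f)"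
  by (simp add: pstar_support)

lemma pstar_pstar [simp]: "pstar (pstar f) = f"
  by (auto simp: pstar_def fun_eq_iff)

lemma pstar_padd: "pstar (padd f g) = padd (pstar f) (pstar g)"
  by (auto simp: pstar_def padd_def fun_eq_iff)

lemma pstar_psmult: "pstar (psmult c f) = psmult (cnj c) (pstar f)"
  by (auto simp: pstar_def psmult_def fun_eq_iff)

lemma pneg_eq_psmult: "pneg f = psmult (-1) f"
  by (simp add: pneg_def psmult_def)

lemma hermitian_padd: "hermitian f \<Longrightarrow> hermitian g \<Longrightarrow> hermitian (padd f g)"
  by (simp add: hermitian_def pstar_padd)

lemma hermitian_psmult_real: "hermitian f \<Longrightarrow> hermitian (psmult (of_real r) f)"
  by (simp add: hermitian_def pstar_psmult)

definition balanced :: "'i::finite pol \<Rightarrow> bool" where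
  "balanced f \<longleftrightarrow> (\<forall>K L. f (K, L) \<noteq> 0 \<longrightarrow> mabs K = mabs L)"

lemma Bset_iff: "f \<in> Bset \<longleftrightarrow> fin_supp f \<and> balanced f"
  by (simp add: Bset_def balanced_def)

lemma Bset_fin_supp: "f \<in> Bset \<Longrightarrow> fin_supp f"
  by (simp add: Bset_iff)

lemma Bset_balanced: "f \<in> Bset \<Longrightarrow> f (K, L) \<noteq> 0 \<Longrightarrow> mabs K = mabs L"
  by (simp add: Bset_def)

lemma balanced_wick:
  assumes f: "fin_supp f" "balanced f" and g: "fin_supp g" "balanced g"
  shows "balanced (wick h f g)"
  unfolding balanced_def
proof (intro allI impI)
  fix P Q assume "wick h f g (P, Q) \<noteq> 0"
  then obtain A B C D where AB: "f (A, B) \<noteq> 0" and CD: "g (C, D) \<noteq> 0"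
    and w: "wick h (monom (A, B)) (monom (C, D)) (P, Q) \<noteq> 0"
    using wick_support_subset[OF f(1) g(1), of h] by (auto simp: prod_eq_iff)
  have mAB: "mabs A = mabs B" using f(2) AB by (auto simp: balanced_def)
  have mCD: "mabs C = mabs D" using g(2) CD by (auto simp: balanced_def)
  from w obtain K where "K \<in> {K. K \<le> B}" "of_real (wick_coeff h B C K) *
      (if K \<le> C \<and> P = A + (C - K) \<and> Q = (B - K) + D then 1 else 0) \<noteq> (0::complex)"
    unfolding wick_monom by (rule sum.not_neutral_contains_not_neutral)
  hence K: "K \<le> B" "K \<le> C" "P = A + (C - K)" "Q = B - K + D" by (auto split: if_splits)
  have "mabs P + mabs K = mabs A + mabs C" using K mabs_diff[OF K(2)] by (simp add: mabs_add)
  moreover have "mabs Q + mabs K = mabs B + mabs D" using K mabs_diff[OF K(1)] by (simp add: mabs_add)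
  ultimately show "mabs P = mabs Q" using mAB mCD by linarith
qed

lemma Bset_wick: "f \<in> Bset \<Longrightarrow> g \<in> Bset \<Longrightarrow> wick h f g \<in> Bset"
  by (simp add: Bset_iff fin_supp_wick balanced_wick)

lemma Bset_padd:
  assumes "f \<in> Bset" "g \<in> Bset"
  shows "padd f g \<in> Bset"
proof -
  have "balanced (padd f g)"
    using assms unfolding Bset_iff balanced_def padd_def by (metis add.left_neutral add.right_neutral)
  thus ?thesis using assms by (simp add: Bset_iff fin_supp_padd)
qed

lemma Bset_psmult: "f \<in> Bset \<Longrightarrow> psmult c f \<in> Bset"
  by (auto simp: Bset_iff balanced_def fin_supp_psmult psmult_def)

lemma Bset_pneg: "f \<in> Bset \<Longrightarrow> pneg f \<in> Bset"
  by (simp add: pneg_eq_psmult Bset_psmult)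

lemma Bset_pstar:
  assumes "f \<in> Bset"
  shows "pstar f \<in> Bset"
proof -
  have "balanced (pstar f)" using assms unfolding Bset_iff balanced_def pstar_def by auto
  thus ?thesis using assms by (simp add: Bset_iff fin_supp_pstar)
qed

lemma Bset_zero: "(\<lambda>_. 0) \<in> Bset"
  by (simp add: Bset_iff balanced_def)

lemma wick_padd_left:
  assumes "fin_supp f1" "fin_supp f2" "fin_supp g"
  shows "wick h (padd f1 f2) g = padd (wick h f1 g) (wick h f2 g)"
proof
  fix r
  let ?F = "{p. f1 p \<noteq> 0} \<union> {p. f2 p \<noteq> 0}" and ?G = "{p. g p \<noteq> 0}"
  have "wick h (padd f1 f2) g r = (\<Sum>p\<in>?F. \<Sum>q\<in>?G. padd f1 f2 p * g q * wick h (monom p) (monom q) r)"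
    by (rule wick_expansion) (use assms in \<open>auto simp: padd_def\<close>)
  also have "\<dots> = wick h f1 g r + wick h f2 g r"
    by (subst (1 2) wick_expansion[where F = ?F and G = ?G])
       (use assms in \<open>auto simp: padd_def distrib_right sum.distrib\<close>)
  finally show "wick h (padd f1 f2) g r = padd (wick h f1 g) (wick h f2 g) r" by (simp add: padd_def)
qed

lemma wick_padd_right:
  assumes "fin_supp f" "fin_supp g1" "fin_supp g2"
  shows "wick h f (padd g1 g2) = padd (wick h f g1) (wick h f g2)"
proof
  fix r
  let ?F = "{p. f p \<noteq> 0}" and ?G = "{p. g1 p \<noteq> 0} \<union> {p. g2 p \<noteq> 0}"
  have "wick h f (padd g1 g2) r = (\<Sum>p\<in>?F. \<Sum>q\<in>?G. f p * padd g1 g2 q * wick h (monom p) (monom q) r)"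
    by (rule wick_expansion) (use assms in \<open>auto simp: padd_def\<close>)
  also have "\<dots> = wick h f g1 r + wick h f g2 r"
    by (subst (1 2) wick_expansion[where F = ?F and G = ?G])
       (use assms in \<open>auto simp: padd_def distrib_right distrib_left sum.distrib\<close>)
  finally show "wick h f (padd g1 g2) r = padd (wick h f g1) (wick h f g2) r" by (simp add: padd_def)
qed

lemma wick_psmult_left:
  assumes "fin_supp f" "fin_supp g"
  shows "wick h (psmult c f) g = psmult c (wick h f g)"
proof
  fix r
  let ?F = "{p. f p \<noteq> 0}" and ?G = "{p. g p \<noteq> 0}"
  have "wick h (psmult c f) g r = (\<Sum>p\<in>?F. \<Sum>q\<in>?G. psmult c f p * g q * wick h (monom p) (monom q) r)"
    by (rule wick_expansion) (use assms in \<open>auto simp: psmult_def\<close>)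
  also have "\<dots> = c * wick h f g r"
    by (subst wick_expansion[where F = ?F and G = ?G])
       (use assms in \<open>auto simp: psmult_def sum_distrib_left mult_ac\<close>)
  finally show "wick h (psmult c f) g r = psmult c (wick h f g) r" by (simp add: psmult_def)
qed

lemma wick_psmult_right:
  assumes "fin_supp f" "fin_supp g"
  shows "wick h f (psmult c g) = psmult c (wick h f g)"
proof
  fix r
  let ?F = "{p. f p \<noteq> 0}" and ?G = "{p. g p \<noteq> 0}"
  have "wick h f (psmult c g) r = (\<Sum>p\<in>?F. \<Sum>q\<in>?G. f p * psmult c g q * wick h (monom p) (monom q) r)"
    by (rule wick_expansion) (use assms in \<open>auto simp: psmult_def\<close>)
  also have "\<dots> = c * wick h f g r"
    by (subst wick_expansion[where F = ?F and G = ?G])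
       (use assms in \<open>auto simp: psmult_def sum_distrib_left mult_ac\<close>)
  finally show "wick h f (psmult c g) r = psmult c (wick h f g) r" by (simp add: psmult_def)
qed

lemma pstar_wick_monom:
  fixes A B C D P Q :: "'i::finite mi"
  shows "wick h (monom (D, C)) (monom (B, A)) (P, Q) = cnj (wick h (monom (A, B)) (monom (C, D)) (Q, P))"
proof -
  have wcs: "wick_coeff h C B K = wick_coeff h B C K" for K by (simp add: wick_coeff_def)
  have "wick h (monom (D, C)) (monom (B, A)) (P, Q) = (\<Sum>K\<in>{K. K \<le> C}. if K \<le> B then
      of_real (wick_coeff h B C K) * (if P = D + (B - K) \<and> Q = (C - K) + A then 1 else 0) else 0)"
    unfolding wick_monom wcs by (intro sum.cong refl) auto
  also have "\<dots> = (\<Sum>K\<in>{K. K \<le> B \<and> K \<le> C}.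
      of_real (wick_coeff h B C K) * (if P = D + (B - K) \<and> Q = (C - K) + A then 1 else 0))"
    by (subst sum.inter_filter[symmetric]) (auto simp: finite_mi_box intro!: sum.cong)
  also have "\<dots> = (\<Sum>K\<in>{K. K \<le> B}. if K \<le> C then of_real (wick_coeff h B C K) *
      (if Q = A + (C - K) \<and> P = (B - K) + D then 1 else 0) else 0)"
    by (subst sum.inter_filter[symmetric]) (auto simp: finite_mi_box add.commute intro!: sum.cong)
  also have "\<dots> = cnj (wick h (monom (A, B)) (monom (C, D)) (Q, P))"
    unfolding wick_monom cnj_sum by (intro sum.cong refl) auto
  finally show ?thesis .
qed

lemma pstar_wick:
  assumes f: "fin_supp f" and g: "fin_supp g"
  shows "pstar (wick h f g) = wick h (pstar g) (pstar f)"
proof (rule ext, clarify)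
  fix P Q :: "'a mi"
  let ?F = "{p. f p \<noteq> 0}" and ?G = "{p. g p \<noteq> 0}"
  have "pstar (wick h f g) (P, Q) = (\<Sum>p\<in>?F. \<Sum>q\<in>?G. cnj (f p) * cnj (g q) * cnj (wick h (monom p) (monom q) (Q, P)))"
    by (simp add: pstar_def wick_expansion[where F = ?F and G = ?G] f g cnj_sum)
  also have "\<dots> = (\<Sum>q\<in>?G. \<Sum>p\<in>?F. cnj (g q) * cnj (f p) * wick h (monom (prod.swap q)) (monom (prod.swap p)) (P, Q))"
    by (subst sum.swap) (auto intro!: sum.cong simp: pstar_wick_monom[symmetric] mult_ac)
  also have "\<dots> = (\<Sum>q\<in>prod.swap ` ?G. \<Sum>p\<in>prod.swap ` ?F. pstar g q * pstar f p * wick h (monom q) (monom p) (P, Q))"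
    by (simp add: sum.reindex pstar_def case_prod_beta)
  also have "\<dots> = wick h (pstar g) (pstar f) (P, Q)"
    by (rule wick_expansion[symmetric]) (use f g in \<open>auto simp: pstar_support\<close>)
  finally show "pstar (wick h f g) (P, Q) = wick h (pstar g) (pstar f) (P, Q)" .
qed

lemma hermitian_square: "fin_supp a \<Longrightarrow> hermitian (wick h (pstar a) a)"
  unfolding hermitian_def by (simp add: pstar_wick fin_supp_pstar)

section \<open>The Fock inner product\<close>

definition fock_weight :: "real \<Rightarrow> 'i::finite mi \<Rightarrow> real" where
  "fock_weight h K = h ^ mabs K * real (mfact K)"

lemma fock_weight_pos: "0 < h \<Longrightarrow> 0 < fock_weight h K"
  by (auto simp: fock_weight_def mfact_def intro!: mult_pos_pos prod_pos)

definition finner_on :: "real \<Rightarrow> 'i::finite mi set \<Rightarrow> 'i fock \<Rightarrow> 'i fock \<Rightarrow> complex" where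
  "finner_on h S u v = (\<Sum>K\<in>S. cnj (u K) * v K * of_real (fock_weight h K))"

lemma finner_eq_finner_on:
  assumes u: "u \<in> Fock" and S: "finite S" "{K. u K \<noteq> 0} \<inter> {K. v K \<noteq> 0} \<subseteq> S"
  shows "finner h u v = finner_on h S u v"
proof -
  have fu: "finite {K. u K \<noteq> 0}" using u by (simp add: Fock_def)
  have "finner h u v = (\<Sum>K\<in>{K. u K \<noteq> 0} \<inter> {K. v K \<noteq> 0}. cnj (u K) * v K * of_real (fock_weight h K))"
    unfolding finner_def fock_weight_def using fu by (intro sum.mono_neutral_right) auto
  also have "\<dots> = finner_on h S u v"
    unfolding finner_on_def using S by (intro sum.mono_neutral_left) auto
  finally show ?thesis .
qed

lemma finner_on_sum_right: "finner_on h S u (\<lambda>K. \<Sum>p\<in>F. c p * v p K) = (\<Sum>p\<in>F. c p * finner_on h S u (v p))"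
proof -
  have "finner_on h S u (\<lambda>K. \<Sum>p\<in>F. c p * v p K)
      = (\<Sum>K\<in>S. \<Sum>p\<in>F. c p * (cnj (u K) * v p K * of_real (fock_weight h K)))"
    unfolding finner_on_def by (simp add: sum_distrib_left sum_distrib_right mult_ac)
  thus ?thesis unfolding finner_on_def by (subst (asm) sum.swap) (simp add: sum_distrib_left)
qed

lemma finner_on_sum_left: "finner_on h S (\<lambda>K. \<Sum>p\<in>F. c p * v p K) u = (\<Sum>p\<in>F. cnj (c p) * finner_on h S (v p) u)"
proof -
  have "finner_on h S (\<lambda>K. \<Sum>p\<in>F. c p * v p K) u
      = (\<Sum>K\<in>S. \<Sum>p\<in>F. cnj (c p) * (cnj (v p K) * u K * of_real (fock_weight h K)))"
    unfolding finner_on_def by (simp add: cnj_sum sum_distrib_left sum_distrib_right mult_ac)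
  thus ?thesis unfolding finner_on_def by (subst (asm) sum.swap) (simp add: sum_distrib_left)
qed

lemma finner_add_right: "finner h u (\<lambda>K. v K + w K) = finner h u v + finner h u w"
  by (simp add: finner_def distrib_left distrib_right sum.distrib)

lemma finner_smult_right: "finner h u (\<lambda>K. c * v K) = c * finner h u v"
  by (simp add: finner_def sum_distrib_left mult_ac)

lemma finner_smult_left: "c \<noteq> 0 \<Longrightarrow> finner h (\<lambda>P. c * u P) v = cnj c * finner h u v"
  by (simp add: finner_def sum_distrib_left mult_ac)

lemma finner_sum_right: "finner h u (\<lambda>K. \<Sum>p\<in>F. c p * w p K) = (\<Sum>p\<in>F. c p * finner h u (w p))"
proof -
  have "finner h u (\<lambda>K. \<Sum>p\<in>F. c p * w p K)
      = (\<Sum>K\<in>{K. u K \<noteq> 0}. \<Sum>p\<in>F. c p * (cnj (u K) * w p K * of_real (h ^ mabs K * real (mfact K))))"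
    unfolding finner_def by (simp add: sum_distrib_left sum_distrib_right mult_ac)
  thus ?thesis unfolding finner_def by (subst (asm) sum.swap) (simp add: sum_distrib_left)
qed

lemma finner_add_left:
  assumes a: "a \<in> Fock" and b: "b \<in> Fock"
  shows "finner h (\<lambda>K. a K + b K) w = finner h a w + finner h b w"
proof -
  let ?S = "{K. a K \<noteq> 0} \<union> {K. b K \<noteq> 0}"
  have S: "finite ?S" using a b by (simp add: Fock_def)
  have "finner h (\<lambda>K. a K + b K) w = finner_on h ?S (\<lambda>K. a K + b K) w"
    by (rule finner_eq_finner_on[OF Fock_add[OF a b] S]) auto
  also have "\<dots> = finner_on h ?S a w + finner_on h ?S b w"
    by (simp add: finner_on_def distrib_right sum.distrib)
  also have "\<dots> = finner h a w + finner h b w"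
  proof -
    have "finner h a w = finner_on h ?S a w" by (rule finner_eq_finner_on[OF a S]) auto
    moreover have "finner h b w = finner_on h ?S b w" by (rule finner_eq_finner_on[OF b S]) auto
    ultimately show ?thesis by simp
  qed
  finally show ?thesis .
qed

lemma finner_commute:
  assumes u: "u \<in> Fock" and v: "v \<in> Fock"
  shows "finner h v u = cnj (finner h u v)"
proof -
  let ?S = "{K. u K \<noteq> 0} \<union> {K. v K \<noteq> 0}"
  have S: "finite ?S" using u v by (simp add: Fock_def)
  have "finner h v u = finner_on h ?S v u" by (rule finner_eq_finner_on[OF v S]) auto
  moreover have "finner h u v = finner_on h ?S u v" by (rule finner_eq_finner_on[OF u S]) auto
  ultimately show ?thesis by (simp add: finner_on_def cnj_sum mult_ac)
qed

lemma cnj_mult_self: "cnj z * z = of_real ((cmod z)\<^sup>2)"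
  by (metis complex_norm_square mult.commute of_real_power)

lemma finner_diagonal:
  "finner h u (\<lambda>P. of_real (d P) * u P) = of_real (\<Sum>P\<in>{P. u P \<noteq> 0}. (cmod (u P))\<^sup>2 * fock_weight h P * d P)"
proof -
  have "cnj z * (of_real r * z) * of_real w = (of_real ((cmod z)\<^sup>2 * w * r) :: complex)" for z r w
  proof -
    have "cnj z * (of_real r * z) * of_real w = (cnj z * z) * of_real w * of_real r" by (simp add: mult_ac)
    also have "\<dots> = of_real ((cmod z)\<^sup>2) * of_real w * of_real r" by (simp only: cnj_mult_self)
    finally show ?thesis by simp
  qed
  thus ?thesis unfolding finner_def fock_weight_def of_real_sum by (intro sum.cong refl)
qed

lemma finner_self: "finner h u u = of_real (\<Sum>P\<in>{P. u P \<noteq> 0}. (cmod (u P))\<^sup>2 * fock_weight h P)"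
  using finner_diagonal[of h u "\<lambda>_. 1"] by simp

lemma finner_self_nonneg: "0 < h \<Longrightarrow> 0 \<le> finner h w w"
  by (simp add: finner_self sum_nonneg less_imp_le[OF fock_weight_pos] less_eq_complex_def)

lemma finner_monom_left: "finner h (monom P) w = w P * of_real (fock_weight h P)"
proof -
  have "{K. monom P K \<noteq> 0} = {P}" by (auto simp: monom_def)
  thus ?thesis by (simp add: finner_def monom_def fock_weight_def)
qed

lemma finite_shifted_support: "u \<in> Fock \<Longrightarrow> finite {R. u (R + K) \<noteq> 0}"
  using finite_vimageI[of "{P. u P \<noteq> 0}" "\<lambda>R. R + K"] by (simp add: Fock_def vimage_def inj_def)

definition pi_monom_weight :: "real \<Rightarrow> 'i::finite mi \<Rightarrow> 'i mi \<Rightarrow> 'i mi \<Rightarrow> real" where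
  "pi_monom_weight h K L R = h ^ mabs L * (\<Prod>i\<in>UNIV. fact (R i + L i) / fact (R i)) * fock_weight h (R + K)"

lemma pi_monom_weight_commute: "pi_monom_weight h K L R = pi_monom_weight h L K R"
  by (simp add: pi_monom_weight_def fock_weight_def mabs_add mfact_def power_add prod_dividef field_simps)

lemma finner_pi_monom_eq_sum:
  assumes u: "u \<in> Fock" and R0: "finite R0" "{R. u (R + K) \<noteq> 0} \<subseteq> R0"
  shows "finner h u (pi_monom h K L v) = (\<Sum>R\<in>R0. cnj (u (R + K)) * v (R + L) * of_real (pi_monom_weight h K L R))"
proof -
  have injK: "inj (\<lambda>R. R + K)" by (auto intro: injI)
  have sub: "{P. u P \<noteq> 0} \<inter> {P. pi_monom h K L v P \<noteq> 0} \<subseteq> (\<lambda>R. R + K) ` R0"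
  proof
    fix P assume P: "P \<in> {P. u P \<noteq> 0} \<inter> {P. pi_monom h K L v P \<noteq> 0}"
    hence "P = (P - K) + K" by (auto simp: pi_monom_apply fun_eq_iff le_fun_def split: if_splits)
    moreover from this have "P - K \<in> R0" using P R0(2) by auto
    ultimately show "P \<in> (\<lambda>R. R + K) ` R0" by (rule image_eqI)
  qed
  have "finner h u (pi_monom h K L v) = finner_on h ((\<lambda>R. R + K) ` R0) u (pi_monom h K L v)"
    by (rule finner_eq_finner_on[OF u]) (use R0 sub in auto)
  also have "\<dots> = (\<Sum>R\<in>R0. cnj (u (R + K)) * pi_monom h K L v (R + K) * of_real (fock_weight h (R + K)))"
    unfolding finner_on_def by (subst sum.reindex) (use injK in \<open>auto simp: inj_on_def\<close>)
  also have "\<dots> = (\<Sum>R\<in>R0. cnj (u (R + K)) * v (R + L) * of_real (pi_monom_weight h K L R))"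
  proof (rule sum.cong[OF refl])
    fix R :: "'a mi"
    have "R + K - K = R" "K \<le> R + K" by (auto simp: fun_eq_iff le_fun_def)
    thus "cnj (u (R + K)) * pi_monom h K L v (R + K) * of_real (fock_weight h (R + K))
        = cnj (u (R + K)) * v (R + L) * of_real (pi_monom_weight h K L R)"
      unfolding pi_monom_apply pi_monom_weight_def by (simp add: mult_ac del: of_real_prod)
  qed
  finally show ?thesis .
qed

lemma finner_pi_monom_adjoint:
  assumes u: "u \<in> Fock" and v: "v \<in> Fock"
  shows "finner h u (pi_monom h K L v) = finner h (pi_monom h L K u) v"
proof -
  define R0 where "R0 = {R. u (R + K) \<noteq> 0} \<union> {R. v (R + L) \<noteq> 0}"
  have R0: "finite R0" using finite_shifted_support[OF u] finite_shifted_support[OF v] by (simp add: R0_def)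
  have "finner h (pi_monom h L K u) v = cnj (finner h v (pi_monom h L K u))"
    by (rule finner_commute[OF v Fock_pi_monom[OF u]])
  also have "\<dots> = cnj (\<Sum>R\<in>R0. cnj (v (R + L)) * u (R + K) * of_real (pi_monom_weight h L K R))"
    by (subst finner_pi_monom_eq_sum[OF v R0]) (auto simp: R0_def)
  also have "\<dots> = (\<Sum>R\<in>R0. cnj (u (R + K)) * v (R + L) * of_real (pi_monom_weight h K L R))"
    by (simp add: cnj_sum pi_monom_weight_commute mult_ac)
  also have "\<dots> = finner h u (pi_monom h K L v)"
    by (subst finner_pi_monom_eq_sum[OF u R0]) (auto simp: R0_def)
  finally show ?thesis by simp
qed

lemma piop_pstar_eq_sum:
  assumes f: "fin_supp f"
  shows "piop h (pstar f) u K = (\<Sum>p\<in>{p. f p \<noteq> 0}. cnj (f p) * pi_monom h (snd p) (fst p) u K)"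
proof -
  have "piop h (pstar f) u K = (\<Sum>p\<in>prod.swap ` {p. f p \<noteq> 0}. pstar f p * pi_monom h (fst p) (snd p) u K)"
    by (rule piop_eq_sum_superset) (use f in \<open>auto simp: pstar_support\<close>)
  also have "\<dots> = (\<Sum>p\<in>{p. f p \<noteq> 0}. cnj (f p) * pi_monom h (snd p) (fst p) u K)"
    by (simp add: sum.reindex pstar_def case_prod_beta)
  finally show ?thesis .
qed

theorem finner_piop_adjoint:
  assumes u: "u \<in> Fock" and v: "v \<in> Fock" and f: "fin_supp f"
  shows "finner h u (piop h f v) = finner h (piop h (pstar f) u) v"
proof -
  let ?F = "{p. f p \<noteq> 0}"
  define S where "S = {K. u K \<noteq> 0} \<union> {K. v K \<noteq> 0} \<union>
     (\<Union>p\<in>?F. {K. pi_monom h (fst p) (snd p) v K \<noteq> 0} \<union> {K. pi_monom h (snd p) (fst p) u K \<noteq> 0})"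
  have fS: "finite S" unfolding S_def using u v f Fock_pi_monom[OF u] Fock_pi_monom[OF v] by (auto simp: Fock_def)
  have "finner h u (piop h f v) = finner_on h S u (piop h f v)"
    by (rule finner_eq_finner_on[OF u fS]) (auto simp: S_def)
  also have "\<dots> = (\<Sum>p\<in>?F. f p * finner_on h S u (pi_monom h (fst p) (snd p) v))"
    unfolding piop_eq_sum_pi_monom by (rule finner_on_sum_right)
  also have "\<dots> = (\<Sum>p\<in>?F. f p * finner_on h S (pi_monom h (snd p) (fst p) u) v)"
  proof (rule sum.cong[OF refl])
    fix p assume p: "p \<in> ?F"
    have "finner_on h S u (pi_monom h (fst p) (snd p) v) = finner h u (pi_monom h (fst p) (snd p) v)"
      by (rule finner_eq_finner_on[symmetric, OF u fS]) (auto simp: S_def)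
    also have "\<dots> = finner h (pi_monom h (snd p) (fst p) u) v" by (rule finner_pi_monom_adjoint[OF u v])
    also have "\<dots> = finner_on h S (pi_monom h (snd p) (fst p) u) v"
      by (rule finner_eq_finner_on[OF Fock_pi_monom[OF u] fS]) (use p in \<open>auto simp: S_def\<close>)
    finally show "f p * finner_on h S u (pi_monom h (fst p) (snd p) v) = f p * finner_on h S (pi_monom h (snd p) (fst p) u) v"
      by simp
  qed
  also have "\<dots> = finner_on h S (piop h (pstar f) u) v"
    unfolding piop_pstar_eq_sum[OF f] by (simp add: finner_on_sum_left)
  also have "\<dots> = finner h (piop h (pstar f) u) v"
    by (rule finner_eq_finner_on[symmetric, OF Fock_piop[OF u fin_supp_pstar[OF f]] fS]) (auto simp: S_def)
  finally show ?thesis .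
qed

lemma finner_piop_square:
  assumes a: "fin_supp a" and u: "u \<in> Fock"
  shows "finner h u (piop h (wick h (pstar a) a) u) = finner h (piop h a u) (piop h a u)"
proof -
  have "piop h (wick h (pstar a) a) u = piop h (pstar a) (piop h a u)"
    by (rule ext) (rule piop_wick[OF fin_supp_pstar[OF a] a])
  thus ?thesis using finner_piop_adjoint[OF u Fock_piop[OF u a] fin_supp_pstar[OF a], of h] by simp
qed

lemma finner_piop_hermitian_real:
  assumes "fin_supp s" "hermitian s" and u: "u \<in> Fock"
  shows "cnj (finner h u (piop h s u)) = finner h u (piop h s u)"
proof -
  have "finner h u (piop h s u) = finner h (piop h s u) u"
    using finner_piop_adjoint[OF u u assms(1), of h] assms(2) by (simp add: hermitian_def)
  also have "\<dots> = cnj (finner h u (piop h s u))" by (rule finner_commute[OF u Fock_piop[OF u assms(1)]])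
  finally show ?thesis by simp
qed

section \<open>Sums of squares are positive\<close>

lemma piop_zero: "piop h (\<lambda>_. 0) u = (\<lambda>_. 0)"
  by (simp add: piop_def fun_eq_iff)

lemma finner_zero_right: "finner h u (\<lambda>_. 0) = 0"
  by (simp add: finner_def)

lemma square_Bplus:
  assumes h: "0 < h" and a: "a \<in> Bset"
  shows "wick h (pstar a) a \<in> Bplus h"
proof -
  have "0 \<le> finner h u (piop h (wick h (pstar a) a) u)" if "u \<in> Fock" for u
    using finner_piop_square[OF Bset_fin_supp[OF a] that] finner_self_nonneg[OF h] by simp
  thus ?thesis
    using Bset_wick[OF Bset_pstar[OF a] a] hermitian_square[OF Bset_fin_supp[OF a]] by (simp add: Bplus_def)
qed

lemma Bplus_padd:
  assumes f: "f \<in> Bplus h" and g: "g \<in> Bplus h"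
  shows "padd f g \<in> Bplus h"
proof -
  have B: "f \<in> Bset" "g \<in> Bset" using f g by (auto simp: Bplus_def)
  have "0 \<le> finner h u (piop h (padd f g) u)" if u: "u \<in> Fock" for u
  proof -
    have "piop h (padd f g) u = (\<lambda>K. piop h f u K + piop h g u K)"
      using B by (simp add: piop_padd Bset_fin_supp fun_eq_iff)
    moreover have "0 \<le> finner h u (piop h f u)" "0 \<le> finner h u (piop h g u)"
      using f g u by (auto simp: Bplus_def)
    ultimately show ?thesis by (simp add: finner_add_right)
  qed
  thus ?thesis using f g Bset_padd[OF B] by (simp add: Bplus_def hermitian_padd)
qed

definition sum_squares :: "real \<Rightarrow> 'i::finite pol list \<Rightarrow> 'i pol" where
  "sum_squares h as = foldr (\<lambda>a s. padd (wick h (pstar a) a) s) as (\<lambda>_. 0)"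

lemma Bpp_iff: "f \<in> Bpp h \<longleftrightarrow> (\<exists>as. set as \<subseteq> Bset \<and> f = sum_squares h as)"
  by (simp add: Bpp_def sum_squares_def)

lemma sum_squares_Cons: "sum_squares h (a # as) = padd (wick h (pstar a) a) (sum_squares h as)"
  by (simp add: sum_squares_def)

lemma Bset_sum_squares: "set as \<subseteq> Bset \<Longrightarrow> sum_squares h as \<in> Bset"
  by (induction as) (auto simp: sum_squares_def Bset_zero Bset_padd Bset_wick Bset_pstar)

lemma finner_piop_sum_squares:
  assumes "set as \<subseteq> Bset"
  shows "finner h u (piop h (sum_squares h as) u) = (\<Sum>a\<leftarrow>as. finner h u (piop h (wick h (pstar a) a) u))"
  using assms
proof (induction as)
  case Nil
  show ?case by (simp add: sum_squares_def piop_zero finner_zero_right)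
next
  case (Cons a as)
  have "wick h (pstar a) a \<in> Bset" using Cons.prems by (simp add: Bset_wick Bset_pstar)
  moreover have "sum_squares h as \<in> Bset" using Cons.prems by (simp add: Bset_sum_squares)
  ultimately have "piop h (sum_squares h (a # as)) u
      = (\<lambda>P. piop h (wick h (pstar a) a) u P + piop h (sum_squares h as) u P)"
    by (simp add: sum_squares_Cons fun_eq_iff piop_padd Bset_fin_supp)
  thus ?case using Cons by (simp add: finner_add_right)
qed

lemma Bpp_subset_Bplus:
  assumes h: "0 < h"
  shows "Bpp h \<subseteq> Bplus h"
proof
  fix f assume "f \<in> Bpp h"
  then obtain as where as: "set as \<subseteq> Bset" "f = sum_squares h as" by (auto simp: Bpp_iff)
  have zero: "(\<lambda>_. 0) \<in> Bplus h"
    by (simp add: Bplus_def Bset_zero hermitian_def pstar_def piop_zero finner_zero_right fun_eq_iff case_prod_beta)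
  have "sum_squares h as \<in> Bplus h" using as(1)
    by (induction as) (auto simp: sum_squares_def zero intro!: Bplus_padd square_Bplus[OF h])
  thus "f \<in> Bplus h" using as(2) by simp
qed

section \<open>Faithfulness and the number operator\<close>

lemma pi_monom_monom_diagonal: "pi_monom h K L (monom L) K = of_real (h ^ mabs L * real (mfact L))"
  by (simp add: pi_monom_apply monom_def mfact_def)

lemma pi_monom_monom_eq_0:
  assumes "mabs L \<le> mabs L'" "(K', L') \<noteq> (K, L)"
  shows "pi_monom h K' L' (monom L) K = 0"
proof (rule ccontr)
  assume "pi_monom h K' L' (monom L) K \<noteq> 0"
  hence KK: "K' \<le> K" and e: "K - K' + L' = L" by (auto simp: pi_monom_apply monom_def split: if_splits)
  have "L' \<le> L" unfolding le_fun_def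
  proof
    fix i
    have "(K - K' + L') i = L i" using e by simp
    thus "L' i \<le> L i" by simp
  qed
  hence "L' = L" using assms(1) by (simp add: mi_le_mabs_eq order_antisym mabs_diff[symmetric])
  hence "K' = K" using e KK by (auto simp: fun_eq_iff le_fun_def) (metis diff_is_0_eq le_antisym)
  thus False using \<open>L' = L\<close> assms(2) by simp
qed

text \<open>A monomial \<open>z^K zbar^L\<close> of \<open>f\<close> with \<open>|L|\<close> minimal is detected by applying \<open>\<pi>(f)\<close>
  to \<open>z^L\<close> and reading off the coefficient of \<open>z^K\<close>.\<close>

lemma eq_0_if_piop_eq_0:
  assumes h: "0 < h" and f: "fin_supp f" and z: "\<And>u. u \<in> Fock \<Longrightarrow> piop h f u = (\<lambda>_. 0)"
  shows "f = (\<lambda>_. 0)"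
proof (rule ccontr)
  assume "f \<noteq> (\<lambda>_. 0)"
  then obtain p0 where "f p0 \<noteq> 0" by (metis ext)
  then obtain p where p: "f p \<noteq> 0" and min: "\<And>q. f q \<noteq> 0 \<Longrightarrow> mabs (snd p) \<le> mabs (snd q)"
    using ex_has_least_nat[of "\<lambda>p. f p \<noteq> 0" p0 "\<lambda>p. mabs (snd p)"] by blast
  obtain K L where KL: "p = (K, L)" by (cases p)
  have "piop h f (monom L) K = (\<Sum>q\<in>{q. f q \<noteq> 0}. if q = (K, L) then f (K, L) * pi_monom h K L (monom L) K else 0)"
    unfolding piop_eq_sum_pi_monom
    by (intro sum.cong refl) (use min KL in \<open>auto simp: pi_monom_monom_eq_0\<close>)
  also have "\<dots> = f (K, L) * of_real (h ^ mabs L * real (mfact L))"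
    using f p KL by (simp add: pi_monom_monom_diagonal)
  finally have "piop h f (monom L) K \<noteq> 0" using p KL h by (simp add: mfact_def)
  thus False using z[OF Fock_monom] by simp
qed

lemma piop_inject:
  assumes h: "0 < h" and f: "fin_supp f" and g: "fin_supp g"
    and eq: "\<And>u. u \<in> Fock \<Longrightarrow> piop h f u = piop h g u"
  shows "f = g"
proof -
  have "padd f (pneg g) = (\<lambda>_. 0)"
  proof (rule eq_0_if_piop_eq_0[OF h fin_supp_padd[OF f]])
    show "fin_supp (pneg g)" using g by (simp add: pneg_eq_psmult fin_supp_psmult)
    fix u :: "'a fock" assume "u \<in> Fock"
    thus "piop h (padd f (pneg g)) u = (\<lambda>_. 0)"
      using eq by (simp add: pneg_eq_psmult fun_eq_iff piop_padd[OF f fin_supp_psmult[OF g]] piop_psmult[OF g])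
  qed
  thus ?thesis by (auto simp: padd_def pneg_def fun_eq_iff)
qed

definition unit_mi :: "'i::finite \<Rightarrow> 'i mi" where
  "unit_mi j = (\<lambda>i. if i = j then 1 else 0)"

lemma Jpol_support: "{p. (Jpol :: 'i::finite pol) p \<noteq> 0} = (\<lambda>j. (unit_mi j, unit_mi j)) ` UNIV"
  by (auto simp: Jpol_def unit_mi_def split: if_splits)

lemma pone_support: "{p. (pone :: 'i::finite pol) p \<noteq> 0} = {(0, 0)}"
  by (auto simp: pone_def zero_fun_def split: if_splits)

lemma Jpol_unit_mi: "Jpol (unit_mi j, unit_mi j) = 1"
  by (auto simp: Jpol_def unit_mi_def)

lemma Bset_Jpol: "Jpol \<in> Bset"
proof -
  have "balanced (Jpol :: 'i::finite pol)" by (auto simp: balanced_def Jpol_def)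
  thus ?thesis by (simp add: Bset_iff Jpol_support)
qed

lemma Bset_pone: "pone \<in> Bset"
proof -
  have "balanced (pone :: 'i::finite pol)" by (auto simp: balanced_def pone_def split: if_splits)
  thus ?thesis by (simp add: Bset_iff pone_support)
qed

lemma hermitian_Jpol: "hermitian Jpol"
  by (auto simp: hermitian_def pstar_def Jpol_def fun_eq_iff)

lemma hermitian_pone: "hermitian pone"
  by (auto simp: hermitian_def pstar_def pone_def fun_eq_iff)

lemma piop_pone: "piop h pone u = u"
proof
  fix P
  have "piop h pone u P = pi_monom h 0 0 u P"
    by (simp add: piop_eq_sum_pi_monom pone_support) (simp add: pone_def zero_fun_def)
  thus "piop h pone u P = u P" by (simp add: pi_monom_apply mabs_def)
qed

lemma pi_monom_unit_mi: "pi_monom h (unit_mi j) (unit_mi j) u P = of_real (h * real (P j)) * u P"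
proof (cases "unit_mi j \<le> P")
  case True
  have e: "P - unit_mi j + unit_mi j = P" using True by (auto simp: fun_eq_iff le_fun_def unit_mi_def)
  have "P j \<ge> 1" using True by (auto simp: le_fun_def unit_mi_def dest: spec[of _ j])
  hence "(\<Prod>i\<in>UNIV. fact ((P - unit_mi j) i + unit_mi j i) / fact ((P - unit_mi j) i))
      = (\<Prod>i\<in>UNIV. if i = j then real (P j) else 1)"
    by (intro prod.cong refl) (auto simp: unit_mi_def fact_reduce)
  moreover have "mabs (unit_mi j) = 1" by (simp add: mabs_def unit_mi_def)
  ultimately show ?thesis using True by (simp add: pi_monom_apply e)
next
  case False
  hence "P j = 0" by (auto simp: le_fun_def unit_mi_def split: if_splits)
  thus ?thesis using False by (simp add: pi_monom_apply)
qed

lemma piop_Jpol: "piop h Jpol u P = of_real (h * real (mabs P)) * u P"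
proof -
  have inj: "inj (\<lambda>j::'a. (unit_mi j, unit_mi j))"
    by (rule injI) (auto simp: unit_mi_def fun_eq_iff split: if_splits)
  have "piop h Jpol u P = (\<Sum>p\<in>(\<lambda>j. (unit_mi j, unit_mi j)) ` UNIV. Jpol p * pi_monom h (fst p) (snd p) u P)"
    by (simp add: piop_eq_sum_pi_monom Jpol_support)
  also have "\<dots> = (\<Sum>j\<in>UNIV. pi_monom h (unit_mi j) (unit_mi j) u P)"
    by (subst sum.reindex[OF inj]) (simp add: Jpol_unit_mi)
  also have "\<dots> = of_real (h * real (mabs P)) * u P"
    by (simp add: pi_monom_unit_mi mabs_def sum_distrib_left sum_distrib_right)
  finally show ?thesis .
qed

definition Jshift :: "real \<Rightarrow> 'i::finite pol" where
  "Jshift \<mu> = padd Jpol (psmult (- of_real \<mu>) pone)"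

lemma Rset_Jshift:
  "Rset h \<mu> = {f \<in> Bset. hermitian f \<and>
     (\<forall>\<omega>. is_state h \<omega> \<and> \<omega> (wick h (Jshift \<mu>) (Jshift \<mu>)) = 0 \<longrightarrow> 0 \<le> \<omega> f)}"
  by (simp add: Rset_def Jshift_def)

lemma Bset_Jshift: "Jshift \<mu> \<in> Bset"
  by (simp add: Jshift_def Bset_padd Bset_psmult Bset_Jpol Bset_pone)

lemma hermitian_Jshift: "hermitian (Jshift \<mu>)"
  by (simp add: hermitian_def Jshift_def pstar_padd pstar_psmult
      hermitian_Jpol[unfolded hermitian_def] hermitian_pone[unfolded hermitian_def])

lemma piop_Jshift: "piop h (Jshift \<mu>) u P = of_real (h * real (mabs P) - \<mu>) * u P"
  by (simp add: Jshift_def piop_padd piop_psmult fin_supp_psmult Bset_fin_supp[OF Bset_Jpol]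
      Bset_fin_supp[OF Bset_pone] piop_Jpol piop_pone algebra_simps)

fun Jshift_pow :: "real \<Rightarrow> real \<Rightarrow> nat \<Rightarrow> 'i::finite pol" where
  "Jshift_pow h \<mu> 0 = pone"
| "Jshift_pow h \<mu> (Suc n) = wick h (Jshift_pow h \<mu> n) (Jshift \<mu>)"

lemma Bset_Jshift_pow: "Jshift_pow h \<mu> n \<in> Bset"
  by (induction n) (simp_all add: Bset_pone Bset_Jshift Bset_wick)

lemma piop_Jshift_pow: "piop h (Jshift_pow h \<mu> n) u P = of_real ((h * real (mabs P) - \<mu>) ^ n) * u P"
proof (induction n arbitrary: u)
  case 0
  show ?case by (simp add: piop_pone)
next
  case (Suc n)
  have "piop h (Jshift_pow h \<mu> (Suc n)) u P = piop h (Jshift_pow h \<mu> n) (piop h (Jshift \<mu>) u) P"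
    by (simp add: piop_wick Bset_fin_supp[OF Bset_Jshift_pow] Bset_fin_supp[OF Bset_Jshift])
  thus ?case by (simp add: Suc piop_Jshift)
qed

lemma hermitian_Jshift_pow:
  assumes h: "0 < h"
  shows "hermitian (Jshift_pow h \<mu> n :: 'i::finite pol)"
proof (induction n)
  case 0
  show ?case by (simp add: hermitian_pone)
next
  case (Suc n)
  have fin: "fin_supp (Jshift_pow h \<mu> n :: 'i pol)" "fin_supp (Jshift \<mu> :: 'i pol)"
    by (simp_all add: Bset_fin_supp[OF Bset_Jshift_pow] Bset_fin_supp[OF Bset_Jshift])
  have "wick h (Jshift \<mu>) (Jshift_pow h \<mu> n) = wick h (Jshift_pow h \<mu> n) (Jshift \<mu> :: 'i pol)"
    using fin by (intro piop_inject[OF h]) (simp_all add: fin_supp_wick piop_wick piop_Jshift piop_Jshift_pow fun_eq_iff)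
  thus ?case using Suc fin by (simp add: hermitian_def pstar_wick hermitian_Jshift[unfolded hermitian_def])
qed

section \<open>States\<close>

lemma state_padd: "is_state h \<omega> \<Longrightarrow> f \<in> Bset \<Longrightarrow> g \<in> Bset \<Longrightarrow> \<omega> (padd f g) = \<omega> f + \<omega> g"
  by (simp add: is_state_def)

lemma state_psmult: "is_state h \<omega> \<Longrightarrow> f \<in> Bset \<Longrightarrow> \<omega> (psmult c f) = c * \<omega> f"
  by (simp add: is_state_def)

lemma state_nonneg: "is_state h \<omega> \<Longrightarrow> f \<in> Bplus h \<Longrightarrow> 0 \<le> \<omega> f"
  by (simp add: is_state_def)

lemma real_quadratic_nonneg_imp_linear_coeff_eq_0:
  fixes A x :: real
  assumes A: "0 \<le> A" and q: "\<And>s. 0 \<le> s\<^sup>2 * A + s * x"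
  shows "x = 0"
proof -
  define B where "B = A + 1"
  have B: "B \<noteq> 0" "A = B - 1" using A by (auto simp: B_def)
  define s where "s = - x / B"
  have "B\<^sup>2 * (s\<^sup>2 * A + s * x) = - x\<^sup>2"
    unfolding s_def B(2) using B(1) by (simp add: field_simps power2_eq_square)
  moreover have "0 \<le> B\<^sup>2 * (s\<^sup>2 * A + s * x)" using q[of s] by simp
  ultimately show ?thesis by simp
qed

lemma quadratic_nonneg_imp_linear_coeff_eq_0:
  fixes A \<beta> \<gamma> :: complex
  assumes A: "0 \<le> A" and q: "\<And>t. 0 \<le> cnj t * t * A + cnj t * \<beta> + t * \<gamma>"
  shows "\<beta> = 0"
proof -
  have AR: "Im A = 0" "0 \<le> Re A" using A by (auto simp: less_eq_complex_def)
  have r: "0 \<le> s\<^sup>2 * Re A + s * Re (\<beta> + \<gamma>)" and ri: "s * Im (\<beta> + \<gamma>) = 0" for s :: real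
    using q[of "of_real s"] AR by (auto simp: less_eq_complex_def power2_eq_square algebra_simps)
  have i: "0 \<le> s\<^sup>2 * Re A + s * (- Im (\<gamma> - \<beta>))" and ii: "s * Re (\<gamma> - \<beta>) = 0" for s :: real
    using q[of "\<i> * of_real s"] AR by (auto simp: less_eq_complex_def power2_eq_square algebra_simps)
  have "Re (\<beta> + \<gamma>) = 0" "- Im (\<gamma> - \<beta>) = 0"
    using real_quadratic_nonneg_imp_linear_coeff_eq_0[OF AR(2)] r i by blast+
  moreover have "Im (\<beta> + \<gamma>) = 0" "Re (\<gamma> - \<beta>) = 0" using ri[of 1] ii[of 1] by simp_all
  ultimately show ?thesis by (simp add: complex_eq_iff)
qed

lemma wick_square_expand:
  assumes b: "fin_supp b" and c: "fin_supp c" "hermitian c"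
  shows "wick h (pstar (padd (psmult t (pstar b)) c)) (padd (psmult t (pstar b)) c)
    = padd (psmult (cnj t) (padd (psmult t (wick h b (pstar b))) (wick h b c)))
           (padd (psmult t (wick h c (pstar b))) (wick h c c))"
proof -
  have pc: "pstar c = c" using c(2) by (simp add: hermitian_def)
  have fb: "fin_supp (pstar b)" by (rule fin_supp_pstar[OF b])
  have fx: "fin_supp (padd (psmult t (pstar b)) c)" by (rule fin_supp_padd[OF fin_supp_psmult[OF fb] c(1)])
  show ?thesis
    by (simp add: pstar_padd pstar_psmult pc wick_padd_left[OF fin_supp_psmult[OF b] c(1) fx]
        wick_psmult_left[OF b fx] wick_padd_right[OF _ fin_supp_psmult[OF fb] c(1)] b c(1)
        wick_psmult_right[OF _ fb])
qed

text \<open>Cauchy--Schwarz for states: \<open>\<omega>(c\<star>c) = 0\<close> forces \<open>\<omega>(b\<star>c) = 0\<close>, because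
  \<open>\<omega>((t b\<^sup>* + c)\<^sup>* \<star> (t b\<^sup>* + c)) \<ge> 0\<close> for all \<open>t\<close>.\<close>

lemma state_wick_eq_0:
  assumes h: "0 < h" and st: "is_state h \<omega>" and c: "c \<in> Bset" "hermitian c"
    and cc: "\<omega> (wick h c c) = 0" and b: "b \<in> Bset"
  shows "\<omega> (wick h b c) = 0"
proof (rule quadratic_nonneg_imp_linear_coeff_eq_0)
  have bs: "pstar b \<in> Bset" using b by (rule Bset_pstar)
  show "0 \<le> \<omega> (wick h b (pstar b))"
    using state_nonneg[OF st square_Bplus[OF h bs]] by simp
  fix t
  define x where "x = padd (psmult t (pstar b)) c"
  have "x \<in> Bset" unfolding x_def using bs c by (simp add: Bset_padd Bset_psmult)
  hence "0 \<le> \<omega> (wick h (pstar x) x)" by (rule state_nonneg[OF st square_Bplus[OF h]])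
  also have "\<omega> (wick h (pstar x) x) = cnj t * (t * \<omega> (wick h b (pstar b)) + \<omega> (wick h b c)) + t * \<omega> (wick h c (pstar b))"
    unfolding x_def wick_square_expand[OF Bset_fin_supp[OF b] Bset_fin_supp[OF c(1)] c(2)]
    using st b bs c cc by (simp add: state_padd state_psmult Bset_padd Bset_psmult Bset_wick)
  finally show "0 \<le> cnj t * t * \<omega> (wick h b (pstar b)) + cnj t * \<omega> (wick h b c) + t * \<omega> (wick h c (pstar b))"
    by (simp add: algebra_simps)
qed

lemma state_Jshift_pow_eq_0:
  assumes h: "0 < h" and st: "is_state h \<omega>" and cc: "\<omega> (wick h (Jshift \<mu>) (Jshift \<mu>)) = 0"
  shows "\<omega> (Jshift_pow h \<mu> (Suc n) :: 'i::finite pol) = 0"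
  using state_wick_eq_0[OF h st Bset_Jshift hermitian_Jshift cc Bset_Jshift_pow] by simp

lemma Rset_padd:
  assumes f: "f \<in> Rset h \<mu>" and g: "g \<in> Rset h \<mu>"
  shows "padd f g \<in> Rset h \<mu>"
proof -
  have B: "f \<in> Bset" "g \<in> Bset" "hermitian f" "hermitian g" using f g by (auto simp: Rset_def)
  have "0 \<le> \<omega> (padd f g)" if "is_state h \<omega>"
      "\<omega> (wick h (padd Jpol (psmult (- of_real \<mu>) pone)) (padd Jpol (psmult (- of_real \<mu>) pone))) = 0" for \<omega>
  proof -
    have "0 \<le> \<omega> f" "0 \<le> \<omega> g" using f g that by (auto simp: Rset_def)
    thus ?thesis using that(1) B by (simp add: state_padd)
  qed
  thus ?thesis using B by (simp add: Rset_def Bset_padd hermitian_padd)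
qed

lemma Bplus_subset_Rset: "Bplus h \<subseteq> Rset h \<mu>"
  by (auto simp: Rset_def Bplus_def is_state_def)

lemma setsum_Bpp_csupp_subset_Rset:
  assumes h: "0 < h"
  shows "setsum (Bpp h) (csupp (Rset h \<mu>)) \<subseteq> Rset h \<mu>"
  using Rset_padd Bpp_subset_Bplus[OF h] Bplus_subset_Rset by (fastforce simp: setsum_def csupp_def)

lemma is_state_vector:
  assumes u: "u \<in> Fock" and n: "finner h u u = 1"
  shows "is_state h (\<lambda>f. finner h u (piop h f u))"
  unfolding is_state_def
proof (intro conjI ballI allI impI)
  fix f g :: "'a pol" assume "f \<in> Bset" "g \<in> Bset"
  hence "piop h (padd f g) u = (\<lambda>P. piop h f u P + piop h g u P)"
    by (simp add: fun_eq_iff piop_padd Bset_fin_supp)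
  thus "finner h u (piop h (padd f g) u) = finner h u (piop h f u) + finner h u (piop h g u)"
    by (simp add: finner_add_right)
next
  fix f :: "'a pol" and c assume "f \<in> Bset"
  hence "piop h (psmult c f) u = (\<lambda>P. c * piop h f u P)"
    by (simp add: fun_eq_iff piop_psmult Bset_fin_supp)
  thus "finner h u (piop h (psmult c f) u) = c * finner h u (piop h f u)"
    by (simp add: finner_smult_right)
next
  show "finner h u (piop h pone u) = 1" using n by (simp add: piop_pone)
next
  fix f :: "'a pol" assume "f \<in> Bset" "hermitian f"
  thus "finner h u (piop h f u) \<in> \<real>"
    by (metis Reals_cnj_iff finner_piop_hermitian_real[OF Bset_fin_supp _ u])
next
  fix f :: "'a pol" assume "f \<in> Bplus h"
  thus "0 \<le> finner h u (piop h f u)" using u by (simp add: Bplus_def)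
qed

text \<open>Normalized vectors in the eigenspace \<open>{h |P| = \<mu>}\<close> of \<open>\<pi>(J)\<close> give states satisfying
  the constraint.\<close>

lemma Rset_finner_nonneg:
  assumes h: "0 < h" and f: "f \<in> Rset h \<mu>" and u: "u \<in> Fock"
    and lev: "\<And>P. u P \<noteq> 0 \<Longrightarrow> h * real (mabs P) = \<mu>"
  shows "0 \<le> finner h u (piop h f u)"
proof (cases "\<forall>P. u P = 0")
  case True
  thus ?thesis by (simp add: finner_def)
next
  case False
  then obtain P0 where P0: "u P0 \<noteq> 0" by auto
  define nu where "nu = (\<Sum>P\<in>{P. u P \<noteq> 0}. (cmod (u P))\<^sup>2 * fock_weight h P)"
  have "0 < nu" unfolding nu_def
  proof (rule sum_pos2)
    show "finite {P. u P \<noteq> 0}" using u by (simp add: Fock_def)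
    show "P0 \<in> {P. u P \<noteq> 0}" "0 < (cmod (u P0))\<^sup>2 * fock_weight h P0"
      using P0 fock_weight_pos[OF h, of P0] by auto
  qed (simp add: less_imp_le[OF fock_weight_pos[OF h]])
  define c where "c = 1 / sqrt nu"
  have c0: "0 < c" using \<open>0 < nu\<close> by (simp add: c_def)
  define v where "v = (\<lambda>P. of_real c * u P)"
  have v: "v \<in> Fock" using u c0 by (simp add: v_def Fock_def)
  have "finner h v v = of_real (c * c * nu)"
    using c0 by (simp add: v_def finner_smult_left finner_smult_right finner_self nu_def)
  hence n1: "finner h v v = 1" using \<open>0 < nu\<close> by (simp add: c_def)
  have Jv: "piop h (Jshift \<mu>) v = (\<lambda>_. 0)"
  proof
    fix P show "piop h (Jshift \<mu>) v P = 0"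
      using lev[of P] by (cases "u P = 0") (auto simp: piop_Jshift v_def)
  qed
  have "piop h (wick h (Jshift \<mu>) (Jshift \<mu>)) v = (\<lambda>_. 0)"
    by (simp add: fun_eq_iff piop_wick Bset_fin_supp[OF Bset_Jshift] Jv piop_Jshift)
  hence "0 \<le> finner h v (piop h f v)"
    using f is_state_vector[OF v n1] by (auto simp: Rset_Jshift finner_zero_right)
  also have "finner h v (piop h f v) = of_real (c * c) * finner h u (piop h f u)"
  proof -
    have "piop h f v = (\<lambda>P. of_real c * piop h f u P)" by (simp add: v_def fun_eq_iff piop_smult_vector)
    thus ?thesis using c0 by (simp add: v_def finner_smult_left finner_smult_right)
  qed
  finally have "0 \<le> of_real (c * c) * finner h u (piop h f u)" .
  moreover have "0 < c * c" using c0 by simp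
  ultimately show ?thesis by (auto simp: less_eq_complex_def zero_le_mult_iff)
qed

section \<open>Bounding elements that vanish on an eigenspace of J\<close>

lemma fact_add_div_fact_le_power: "r + a \<le> N \<Longrightarrow> fact (r + a) / fact r \<le> (real N) ^ a"
proof (induction a)
  case (Suc a)
  have "fact (r + Suc a) / fact r = real (r + Suc a) * (fact (r + a) / fact r)"
    by (simp add: algebra_simps)
  also have "\<dots> \<le> real N * real N ^ a"
    using Suc by (intro mult_mono) (auto simp: divide_nonneg_nonneg)
  finally show ?case by simp
qed simp

lemma prod_fact_add_div_fact_le: "(\<Prod>i\<in>UNIV. fact (R i + K i) / fact (R i)) \<le> real (mabs R + mabs K) ^ mabs K"
proof -
  have "(\<Prod>i\<in>UNIV. fact (R i + K i) / fact (R i)) \<le> (\<Prod>i\<in>UNIV. real (mabs R + mabs K) ^ K i)"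
  proof (rule prod_mono)
    fix i :: 'a
    have "R i + K i \<le> mabs R + mabs K" using le_mabs[of R i] le_mabs[of K i] by simp
    thus "0 \<le> (fact (R i + K i) / fact (R i) :: real) \<and> fact (R i + K i) / fact (R i) \<le> real (mabs R + mabs K) ^ K i"
      using fact_add_div_fact_le_power[of "R i" "K i" "mabs R + mabs K"] by (simp add: zero_le_divide_iff)
  qed
  also have "\<dots> = real (mabs R + mabs K) ^ mabs K" by (simp add: mabs_def power_sum)
  finally show ?thesis .
qed

lemma mult_le_weighted_amgm:
  fixes a b c x y M :: real
  assumes "0 \<le> a" "0 \<le> b" "0 \<le> c" "0 \<le> x" "0 \<le> y" "0 \<le> M" "c\<^sup>2 \<le> M\<^sup>2 * x * y"
  shows "a * b * c \<le> M / 2 * (a\<^sup>2 * x + b\<^sup>2 * y)"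
proof -
  have "c \<le> M * sqrt (x * y)"
    using assms by (metis mult.assoc real_le_rsqrt real_sqrt_mult real_sqrt_pow2 real_sqrt_unique
        zero_le_mult_iff mult_nonneg_nonneg)
  hence "a * b * c \<le> a * b * (M * sqrt (x * y))" using assms by (intro mult_left_mono) auto
  also have "a * b * sqrt (x * y) \<le> (a\<^sup>2 * x + b\<^sup>2 * y) / 2"
  proof -
    have "0 \<le> (a * sqrt x - b * sqrt y)\<^sup>2" by simp
    hence "2 * (a * sqrt x) * (b * sqrt y) \<le> (a * sqrt x)\<^sup>2 + (b * sqrt y)\<^sup>2" by (simp add: power2_diff)
    thus ?thesis using assms by (simp add: real_sqrt_mult power_mult_distrib mult_ac)
  qed
  hence "a * b * (M * sqrt (x * y)) \<le> M / 2 * (a\<^sup>2 * x + b\<^sup>2 * y)"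
    using assms by (metis (no_types, lifting) mult.commute mult.left_commute mult_left_mono times_divide_eq_right)
  finally show ?thesis .
qed

lemma pi_monom_weight_sq_le:
  fixes K L R :: "'i::finite mi"
  assumes h: "0 < h" and KL: "mabs K = mabs L"
  shows "(pi_monom_weight h K L R)\<^sup>2
      \<le> ((h * real (mabs R + mabs K)) ^ mabs K)\<^sup>2 * fock_weight h (R + K) * fock_weight h (R + L)"
proof -
  define k where "k = mabs K"
  define G where "G = (\<Prod>i\<in>UNIV. fact (R i) :: real)"
  define PK where "PK = (\<Prod>i\<in>UNIV. fact (R i + K i) :: real)"
  define PL where "PL = (\<Prod>i\<in>UNIV. fact (R i + L i) :: real)"
  define H where "H = h ^ (mabs R + k)"
  define N where "N = real (mabs R + k) ^ k"
  have G: "0 < G" by (simp add: G_def prod_pos)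
  have nonneg: "0 \<le> PK" "0 \<le> PL" "0 \<le> H" using h by (simp_all add: PK_def PL_def H_def prod_nonneg)
  have bK: "PK / G \<le> N" using prod_fact_add_div_fact_le[of R K] by (simp add: PK_def G_def N_def prod_dividef k_def)
  have bL: "PL / G \<le> N" using prod_fact_add_div_fact_le[of R L] by (simp add: PL_def G_def N_def prod_dividef k_def KL)
  have "0 \<le> PK / G" using nonneg G by simp
  hence N: "0 \<le> N" using bK by linarith
  have "(h ^ k * (PL / G) * (H * PK))\<^sup>2 = (h ^ k)\<^sup>2 * H\<^sup>2 * PK * PL * ((PK / G) * (PL / G))"
    using G by (simp add: power2_eq_square field_simps)
  also have "\<dots> \<le> (h ^ k)\<^sup>2 * H\<^sup>2 * PK * PL * (N * N)"
    using nonneg G N bK bL by (intro mult_left_mono mult_mono) (auto simp: divide_nonneg_nonneg)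
  also have "\<dots> = (h ^ k * N)\<^sup>2 * (H * PK) * (H * PL)" by (simp add: power2_eq_square)
  finally show ?thesis
    by (simp add: pi_monom_weight_def fock_weight_def mfact_def H_def PK_def PL_def G_def N_def mabs_add k_def KL
        prod_dividef power_mult_distrib)
qed

lemma sum_shift_le:
  fixes g :: "'i::finite mi \<Rightarrow> real"
  assumes A: "finite A" and S: "finite S" and g0: "\<And>P. 0 \<le> g P" and gS: "\<And>P. P \<notin> S \<Longrightarrow> g P = 0"
  shows "(\<Sum>R\<in>A. g (R + K)) \<le> (\<Sum>P\<in>S. g P)"
proof -
  have inj: "inj_on (\<lambda>R. R + K) X" for X by (auto intro: inj_onI)
  have "(\<Sum>R\<in>A. g (R + K)) = (\<Sum>R\<in>A \<inter> {R. R + K \<in> S}. g (R + K))"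
    using A gS by (intro sum.mono_neutral_right) auto
  also have "\<dots> = (\<Sum>P\<in>(\<lambda>R. R + K) ` (A \<inter> {R. R + K \<in> S}). g P)"
    by (simp add: sum.reindex[OF inj])
  also have "\<dots> \<le> (\<Sum>P\<in>S. g P)"
    using S g0 by (intro sum_mono2) auto
  finally show ?thesis .
qed

lemma finner_pi_monom_bound:
  fixes K L :: "'i::finite mi"
  assumes h: "0 < h" and v: "v \<in> Fock" and KL: "mabs K = mabs L"
  shows "cmod (finner h v (pi_monom h K L v))
    \<le> (\<Sum>P\<in>{P. v P \<noteq> 0}. (cmod (v P))\<^sup>2 * fock_weight h P * (h * real (mabs P)) ^ mabs K)"
proof -
  define k where "k = mabs K"
  define R0 where "R0 = {R. v (R + K) \<noteq> 0}"
  define g where "g P = (cmod (v P))\<^sup>2 * fock_weight h P * (h * real (mabs P)) ^ k" for P :: "'i mi"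
  define c where "c = pi_monom_weight h K L"
  define M where "M R = (h * real (mabs R + k)) ^ k" for R :: "'i mi"
  have fu: "finite {P. v P \<noteq> 0}" using v by (simp add: Fock_def)
  have fR0: "finite R0" unfolding R0_def by (rule finite_shifted_support[OF v])
  have w0: "0 \<le> fock_weight h P" for P by (rule less_imp_le[OF fock_weight_pos[OF h]])
  have c0: "0 \<le> c R" for R
    using h w0 by (auto simp: c_def pi_monom_weight_def intro!: mult_nonneg_nonneg prod_nonneg divide_nonneg_nonneg)
  have eq: "finner h v (pi_monom h K L v) = (\<Sum>R\<in>R0. cnj (v (R + K)) * v (R + L) * of_real (c R))"
    using finner_pi_monom_eq_sum[OF v fR0] by (simp add: R0_def c_def)
  have "cmod (finner h v (pi_monom h K L v)) \<le> (\<Sum>R\<in>R0. cmod (v (R + K)) * cmod (v (R + L)) * c R)"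
    unfolding eq by (rule order_trans[OF norm_sum]) (simp add: norm_mult c0)
  also have "\<dots> \<le> (\<Sum>R\<in>R0. M R / 2 * ((cmod (v (R + K)))\<^sup>2 * fock_weight h (R + K)
      + (cmod (v (R + L)))\<^sup>2 * fock_weight h (R + L)))"
  proof (rule sum_mono)
    fix R
    have "(c R)\<^sup>2 \<le> (M R)\<^sup>2 * fock_weight h (R + K) * fock_weight h (R + L)"
      unfolding c_def M_def k_def by (rule pi_monom_weight_sq_le[OF h KL])
    thus "cmod (v (R + K)) * cmod (v (R + L)) * c R \<le> M R / 2 * ((cmod (v (R + K)))\<^sup>2 * fock_weight h (R + K)
      + (cmod (v (R + L)))\<^sup>2 * fock_weight h (R + L))"
      using h c0 w0 by (intro mult_le_weighted_amgm) (auto simp: M_def)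
  qed
  also have "\<dots> = (\<Sum>R\<in>R0. g (R + K)) / 2 + (\<Sum>R\<in>R0. g (R + L)) / 2"
    by (simp add: g_def M_def mabs_add KL k_def algebra_simps sum.distrib sum_divide_distrib)
  also have "\<dots> \<le> (\<Sum>P\<in>{P. v P \<noteq> 0}. g P) / 2 + (\<Sum>P\<in>{P. v P \<noteq> 0}. g P) / 2"
  proof -
    have g0: "0 \<le> g P" for P using h w0[of P] by (simp add: g_def)
    have gS: "P \<notin> {P. v P \<noteq> 0} \<Longrightarrow> g P = 0" for P by (simp add: g_def)
    show ?thesis
      using sum_shift_le[of R0 "{P. v P \<noteq> 0}" g K, OF fR0 fu g0 gS]
        sum_shift_le[of R0 "{P. v P \<noteq> 0}" g L, OF fR0 fu g0 gS] by simp
  qed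
  finally show ?thesis by (simp add: g_def k_def)
qed

lemma finner_piop_bound:
  fixes s :: "'i::finite pol"
  assumes h: "0 < h" and s: "s \<in> Bset" and v: "v \<in> Fock"
    and k0: "\<And>p. s p \<noteq> 0 \<Longrightarrow> mabs (snd p) \<le> k0"
  shows "cmod (finner h v (piop h s v)) \<le> (\<Sum>p\<in>{p. s p \<noteq> 0}. cmod (s p)) *
           (\<Sum>P\<in>{P. v P \<noteq> 0}. (cmod (v P))\<^sup>2 * fock_weight h P * (1 + h * real (mabs P)) ^ k0)"
proof -
  let ?T = "(\<Sum>P\<in>{P. v P \<noteq> 0}. (cmod (v P))\<^sup>2 * fock_weight h P * (1 + h * real (mabs P)) ^ k0)"
  have "finner h v (piop h s v) = (\<Sum>p\<in>{p. s p \<noteq> 0}. s p * finner h v (pi_monom h (fst p) (snd p) v))"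
    unfolding piop_eq_sum_pi_monom[abs_def] by (rule finner_sum_right)
  hence "cmod (finner h v (piop h s v))
      \<le> (\<Sum>p\<in>{p. s p \<noteq> 0}. cmod (s p) * cmod (finner h v (pi_monom h (fst p) (snd p) v)))"
    by (simp add: norm_mult order_trans[OF norm_sum])
  also have "\<dots> \<le> (\<Sum>p\<in>{p. s p \<noteq> 0}. cmod (s p) * ?T)"
  proof (rule sum_mono)
    fix p assume p: "p \<in> {p. s p \<noteq> 0}"
    obtain K L where pKL: "p = (K, L)" by (cases p)
    have KL: "mabs K = mabs L" using Bset_balanced[OF s] p pKL by simp
    have "cmod (finner h v (pi_monom h K L v))
        \<le> (\<Sum>P\<in>{P. v P \<noteq> 0}. (cmod (v P))\<^sup>2 * fock_weight h P * (h * real (mabs P)) ^ mabs K)"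
      by (rule finner_pi_monom_bound[OF h v KL])
    also have "\<dots> \<le> ?T"
    proof (rule sum_mono)
      fix P :: "'i mi"
      have "(h * real (mabs P)) ^ mabs K \<le> (1 + h * real (mabs P)) ^ k0"
        using h k0[of p] p pKL KL by (intro order_trans[OF power_mono power_increasing]) auto
      thus "(cmod (v P))\<^sup>2 * fock_weight h P * (h * real (mabs P)) ^ mabs K
          \<le> (cmod (v P))\<^sup>2 * fock_weight h P * (1 + h * real (mabs P)) ^ k0"
        using h by (intro mult_left_mono) (auto simp: less_imp_le[OF fock_weight_pos])
    qed
    finally show "cmod (s p) * cmod (finner h v (pi_monom h (fst p) (snd p) v)) \<le> cmod (s p) * ?T"
      using pKL by (simp add: mult_left_mono)
  qed
  also have "\<dots> = (\<Sum>p\<in>{p. s p \<noteq> 0}. cmod (s p)) * ?T" by (simp add: sum_distrib_right)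
  finally show ?thesis .
qed

lemma level_gap:
  assumes h: "0 < h"
  shows "\<exists>\<delta>>0. \<forall>d::nat. h * real d \<noteq> \<mu> \<longrightarrow> \<delta> \<le> \<bar>h * real d - \<mu>\<bar>"
proof -
  define N where "N = nat \<lceil>\<mu> / h\<rceil> + 1"
  define D where "D = {d. d \<le> N \<and> h * real d \<noteq> \<mu>}"
  define \<delta> where "\<delta> = Min (insert h ((\<lambda>d. \<bar>h * real d - \<mu>\<bar>) ` D))"
  have fD: "finite D" by (simp add: D_def)
  have "\<delta> > 0" unfolding \<delta>_def using fD h by (auto simp: D_def)
  moreover have "\<delta> \<le> \<bar>h * real d - \<mu>\<bar>" if d: "h * real d \<noteq> \<mu>" for d
  proof (cases "d \<le> N")
    case True
    thus ?thesis unfolding \<delta>_def using fD d by (intro Min_le) (auto simp: D_def)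
  next
    case False
    hence "real d \<ge> \<mu> / h + 1" unfolding N_def by linarith
    hence "h * real d \<ge> \<mu> + h" using h by (simp add: field_simps)
    moreover have "\<delta> \<le> h" unfolding \<delta>_def using fD by (intro Min_le) auto
    ultimately show ?thesis by simp
  qed
  ultimately show ?thesis by blast
qed

lemma one_plus_le_gap_power:
  fixes x \<mu> \<delta> :: real
  assumes d: "0 < \<delta>" "\<delta> \<le> \<bar>x - \<mu>\<bar>" and x: "0 \<le> x" and mu: "0 \<le> \<mu>"
  shows "(1 + x) ^ e \<le> (2 + \<mu>) ^ e / (min 1 \<delta>) ^ (2 * e) * (x - \<mu>) ^ (2 * e)"
proof -
  define t where "t = \<bar>x - \<mu>\<bar>"
  define d' where "d' = min 1 \<delta>"
  have d': "0 < d'" "d' \<le> 1" "d' \<le> t" using d by (auto simp: d'_def t_def)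
  define q where "q = t / d'"
  have q1: "1 \<le> q" using d' by (simp add: q_def)
  have qt: "t \<le> q" using d' q1 unfolding q_def
    by (metis div_by_1 divide_left_mono dual_order.trans less_eq_real_def mult_cancel_right1 nonzero_mult_div_cancel_left)
  have "1 + \<mu> \<le> (1 + \<mu>) * q" using q1 mu by (simp add: mult_le_cancel_left1)
  moreover have "1 + x \<le> 1 + \<mu> + t" by (simp add: t_def)
  ultimately have "1 + x \<le> (1 + \<mu>) * q + q" using qt by linarith
  hence "(1 + x) ^ e \<le> ((2 + \<mu>) * q) ^ e" using x by (intro power_mono) (auto simp: algebra_simps)
  also have "\<dots> \<le> ((2 + \<mu>) * q\<^sup>2) ^ e"
    using q1 mu by (intro power_mono mult_left_mono) (auto simp: power2_eq_square)
  also have "\<dots> = (2 + \<mu>) ^ e / d' ^ (2 * e) * t ^ (2 * e)"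
    by (simp add: power_mult_distrib power_mult q_def power_divide)
  also have "t ^ (2 * e) = (x - \<mu>) ^ (2 * e)" unfolding t_def by (simp add: power_mult power2_abs)
  finally show ?thesis by (simp add: d'_def)
qed

lemma piop_eq_0_if_level_vanishes:
  assumes s: "s \<in> Bset" and w: "\<And>Q. mabs Q = mabs P \<Longrightarrow> w Q = 0"
  shows "piop h s w P = 0"
  unfolding piop_eq_sum_pi_monom
proof (rule sum.neutral, intro ballI)
  fix p assume p: "p \<in> {p. s p \<noteq> 0}"
  obtain K L where pKL: "p = (K, L)" by (cases p)
  have KL: "mabs K = mabs L" using Bset_balanced[OF s] p pKL by simp
  have "pi_monom h K L w P = 0"
  proof (cases "K \<le> P")
    case True
    have "mabs (P - K + L) = mabs P" using mabs_diff[OF True] KL by (simp add: mabs_add)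
    thus ?thesis using True w by (simp add: pi_monom_apply)
  qed (simp add: pi_monom_apply)
  thus "s p * pi_monom h (fst p) (snd p) w P = 0" using pKL by simp
qed

text \<open>Since \<open>\<pi>(s)\<close> preserves the eigenspaces of \<open>J\<close>, only the component of \<open>u\<close> off the
  eigenspace \<open>{h |P| = \<mu>}\<close> contributes to \<open>\<langle>u, \<pi>(s) u\<rangle>\<close> when \<open>s\<close> vanishes there.\<close>

lemma finner_piop_off_level:
  fixes s :: "'i::finite pol"
  assumes s: "s \<in> Bset" and u: "u \<in> Fock"
    and Z: "\<And>u. u \<in> Fock \<Longrightarrow> (\<And>P. u P \<noteq> 0 \<Longrightarrow> h * real (mabs P) = \<mu>) \<Longrightarrow> finner h u (piop h s u) = 0"
  defines "u2 \<equiv> \<lambda>P. if h * real (mabs P) = \<mu> then 0 else u P"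
  shows "finner h u (piop h s u) = finner h u2 (piop h s u2)"
proof -
  define u1 where "u1 = (\<lambda>P. if h * real (mabs P) = \<mu> then u P else 0)"
  have fu: "finite {P. u P \<noteq> 0}" using u by (simp add: Fock_def)
  have u1: "u1 \<in> Fock" using fu unfolding Fock_def u1_def by (auto intro: finite_subset)
  have u2: "u2 \<in> Fock" using fu unfolding Fock_def u2_def by (auto intro: finite_subset)
  have uu: "u = (\<lambda>K. u1 K + u2 K)" by (auto simp: u1_def u2_def fun_eq_iff)
  have z11: "finner h u1 (piop h s u1) = 0"
    by (rule Z[OF u1]) (auto simp: u1_def split: if_splits)
  have z12: "finner h u1 (piop h s u2) = 0"
    unfolding finner_def
  proof (rule sum.neutral, intro ballI)
    fix P assume "P \<in> {K. u1 K \<noteq> 0}"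
    hence "h * real (mabs P) = \<mu>" by (auto simp: u1_def split: if_splits)
    hence "piop h s u2 P = 0" by (intro piop_eq_0_if_level_vanishes[OF s]) (auto simp: u2_def)
    thus "cnj (u1 P) * piop h s u2 P * of_real (h ^ mabs P * real (mfact P)) = 0" by simp
  qed
  have z21: "finner h u2 (piop h s u1) = 0"
    unfolding finner_def
  proof (rule sum.neutral, intro ballI)
    fix P assume "P \<in> {K. u2 K \<noteq> 0}"
    hence "h * real (mabs P) \<noteq> \<mu>" by (auto simp: u2_def split: if_splits)
    hence "piop h s u1 P = 0" by (intro piop_eq_0_if_level_vanishes[OF s]) (auto simp: u1_def)
    thus "cnj (u2 P) * piop h s u1 P * of_real (h ^ mabs P * real (mfact P)) = 0" by simp
  qed
  have pu: "piop h s u = (\<lambda>P. piop h s u1 P + piop h s u2 P)"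
    by (subst uu) (simp add: piop_add_vector fun_eq_iff)
  have "finner h u (piop h s u) = finner h (\<lambda>K. u1 K + u2 K) (\<lambda>P. piop h s u1 P + piop h s u2 P)"
    by (subst pu, subst (1) uu) (rule refl)
  also have "\<dots> = finner h u2 (piop h s u2)"
    by (simp add: finner_add_left[OF u1 u2] finner_add_right z11 z12 z21)
  finally show ?thesis .
qed

lemma level_gap_power_bound:
  assumes h: "0 < h" and mu: "0 \<le> \<mu>"
  obtains Cw where "0 \<le> Cw"
    "\<And>d::nat. h * real d \<noteq> \<mu> \<Longrightarrow> (1 + h * real d) ^ k \<le> Cw * (h * real d - \<mu>) ^ (2 * (k + 1))"
proof -
  obtain \<delta> where \<delta>: "\<delta> > 0" "\<And>d::nat. h * real d \<noteq> \<mu> \<Longrightarrow> \<delta> \<le> \<bar>h * real d - \<mu>\<bar>"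
    using level_gap[OF h, of \<mu>] by blast
  define Cw where "Cw = (2 + \<mu>) ^ (k + 1) / (min 1 \<delta>) ^ (2 * (k + 1))"
  have "(1 + h * real d) ^ k \<le> Cw * (h * real d - \<mu>) ^ (2 * (k + 1))" if "h * real d \<noteq> \<mu>" for d :: nat
  proof -
    have "(1 + h * real d) ^ k \<le> (1 + h * real d) ^ (k + 1)"
      using h by (intro power_increasing) auto
    also have "\<dots> \<le> Cw * (h * real d - \<mu>) ^ (2 * (k + 1))"
      unfolding Cw_def using \<delta>(1) \<delta>(2)[OF that] h mu by (intro one_plus_le_gap_power) auto
    finally show ?thesis .
  qed
  moreover have "0 \<le> Cw" using mu \<delta> by (simp add: Cw_def)
  ultimately show ?thesis using that by blast
qed

text \<open>Off the eigenspace, \<open>|h |P| - \<mu>|\<close> is bounded below, so the polynomial growth of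
  \<open>\<langle>u, \<pi>(s) u\<rangle>\<close> in \<open>|P|\<close> is dominated by a high even power of \<open>\<pi>(J - \<mu>)\<close>.\<close>

lemma finner_piop_le_Jshift_pow:
  fixes s :: "'i::finite pol"
  assumes h: "0 < h" and mu: "0 \<le> \<mu>" and s: "s \<in> Bset"
    and Z: "\<And>u. u \<in> Fock \<Longrightarrow> (\<And>P. u P \<noteq> 0 \<Longrightarrow> h * real (mabs P) = \<mu>) \<Longrightarrow> finner h u (piop h s u) = 0"
  obtains C e where "0 \<le> C" "0 < e" "\<And>u. u \<in> Fock \<Longrightarrow> cmod (finner h u (piop h s u))
    \<le> C * (\<Sum>P\<in>{P. u P \<noteq> 0}. (cmod (u P))\<^sup>2 * fock_weight h P * (h * real (mabs P) - \<mu>) ^ (2 * e))"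
proof -
  define k0 where "k0 = (\<Sum>p\<in>{p. s p \<noteq> 0}. mabs (snd p))"
  have k0: "mabs (snd p) \<le> k0" if "s p \<noteq> 0" for p
    unfolding k0_def using Bset_fin_supp[OF s] that by (intro member_le_sum[of p]) auto
  define e where "e = k0 + 1"
  define norm1 where "norm1 = (\<Sum>p\<in>{p. s p \<noteq> 0}. cmod (s p))"
  obtain Cw where Cw: "0 \<le> Cw"
    "\<And>d::nat. h * real d \<noteq> \<mu> \<Longrightarrow> (1 + h * real d) ^ k0 \<le> Cw * (h * real d - \<mu>) ^ (2 * e)"
    using level_gap_power_bound[OF h mu, of k0] unfolding e_def by blast
  have C0: "0 \<le> norm1 * Cw" using Cw(1) by (simp add: norm1_def sum_nonneg)
  have w0: "0 \<le> fock_weight h P" for P by (rule less_imp_le[OF fock_weight_pos[OF h]])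
  have bound: "cmod (finner h u (piop h s u))
    \<le> norm1 * Cw * (\<Sum>P\<in>{P. u P \<noteq> 0}. (cmod (u P))\<^sup>2 * fock_weight h P * (h * real (mabs P) - \<mu>) ^ (2 * e))"
    if u: "u \<in> Fock" for u
  proof -
    define u2 where "u2 = (\<lambda>P. if h * real (mabs P) = \<mu> then 0 else u P)"
    have u2: "u2 \<in> Fock" using u unfolding Fock_def u2_def by (auto intro: finite_subset)
    have "cmod (finner h u (piop h s u)) = cmod (finner h u2 (piop h s u2))"
      unfolding u2_def by (subst finner_piop_off_level[OF s u Z]) simp_all
    also have "\<dots> \<le> norm1 * (\<Sum>P\<in>{P. u2 P \<noteq> 0}. (cmod (u2 P))\<^sup>2 * fock_weight h P * (1 + h * real (mabs P)) ^ k0)"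
      unfolding norm1_def by (rule finner_piop_bound[OF h s u2 k0])
    also have "\<dots> \<le> norm1 * (\<Sum>P\<in>{P. u2 P \<noteq> 0}. (cmod (u P))\<^sup>2 * fock_weight h P * (Cw * (h * real (mabs P) - \<mu>) ^ (2 * e)))"
    proof (intro mult_left_mono sum_mono)
      fix P assume P: "P \<in> {P. u2 P \<noteq> 0}"
      hence "h * real (mabs P) \<noteq> \<mu>" and uP: "u2 P = u P" by (auto simp: u2_def split: if_splits)
      thus "(cmod (u2 P))\<^sup>2 * fock_weight h P * (1 + h * real (mabs P)) ^ k0
          \<le> (cmod (u P))\<^sup>2 * fock_weight h P * (Cw * (h * real (mabs P) - \<mu>) ^ (2 * e))"
        unfolding uP using Cw(2) w0[of P] by (intro mult_left_mono) auto
    qed (simp add: norm1_def sum_nonneg)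
    also have "\<dots> \<le> norm1 * (\<Sum>P\<in>{P. u P \<noteq> 0}. (cmod (u P))\<^sup>2 * fock_weight h P * (Cw * (h * real (mabs P) - \<mu>) ^ (2 * e)))"
    proof (intro mult_left_mono sum_mono2)
      show "finite {P. u P \<noteq> 0}" using u by (simp add: Fock_def)
      show "{P. u2 P \<noteq> 0} \<subseteq> {P. u P \<noteq> 0}" by (auto simp: u2_def split: if_splits)
      fix P show "0 \<le> (cmod (u P))\<^sup>2 * fock_weight h P * (Cw * (h * real (mabs P) - \<mu>) ^ (2 * e))"
        using w0[of P] Cw(1) by (simp add: power_mult)
    qed (simp add: norm1_def sum_nonneg)
    finally show ?thesis by (simp add: sum_distrib_left mult_ac)
  qed
  show ?thesis using that[OF C0 _ bound] by (simp add: e_def)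
qed

lemma Bplus_add_Jshift_pow:
  fixes s :: "'i::finite pol"
  assumes h: "0 < h" and mu: "0 \<le> \<mu>" and s: "s \<in> Bset" and hs: "hermitian s"
    and Z: "\<And>u. u \<in> Fock \<Longrightarrow> (\<And>P. u P \<noteq> 0 \<Longrightarrow> h * real (mabs P) = \<mu>) \<Longrightarrow> finner h u (piop h s u) = 0"
  obtains C e where "0 < e"
    "\<And>\<epsilon>. \<bar>\<epsilon>\<bar> = 1 \<Longrightarrow> padd (psmult (of_real \<epsilon>) s) (psmult (of_real C) (Jshift_pow h \<mu> (2 * e))) \<in> Bplus h"
proof -
  obtain C e where C0: "0 \<le> C" and e: "0 < e" and bound: "\<And>u. u \<in> Fock \<Longrightarrow> cmod (finner h u (piop h s u))
    \<le> C * (\<Sum>P\<in>{P. u P \<noteq> 0}. (cmod (u P))\<^sup>2 * fock_weight h P * (h * real (mabs P) - \<mu>) ^ (2 * e))"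
    using finner_piop_le_Jshift_pow[OF h mu s Z] by blast
  let ?y = "Jshift_pow h \<mu> (2 * e) :: 'i pol"
  have fy: "fin_supp ?y" by (rule Bset_fin_supp[OF Bset_Jshift_pow])
  have "padd (psmult (of_real \<epsilon>) s) (psmult (of_real C) ?y) \<in> Bplus h" if eps: "\<bar>\<epsilon>\<bar> = 1" for \<epsilon>
  proof -
    let ?f = "padd (psmult (of_real \<epsilon>) s) (psmult (of_real C) ?y)"
    have "0 \<le> finner h u (piop h ?f u)" if u: "u \<in> Fock" for u
    proof -
      define X where "X = finner h u (piop h s u)"
      define Y where "Y = (\<Sum>P\<in>{P. u P \<noteq> 0}. (cmod (u P))\<^sup>2 * fock_weight h P * (h * real (mabs P) - \<mu>) ^ (2 * e))"
      have "piop h ?f u = (\<lambda>P. of_real \<epsilon> * piop h s u P + of_real C * (of_real ((h * real (mabs P) - \<mu>) ^ (2 * e)) * u P))"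
        using Bset_fin_supp[OF s] fy
        by (simp add: fun_eq_iff piop_padd fin_supp_psmult piop_psmult piop_Jshift_pow)
      hence eq: "finner h u (piop h ?f u) = of_real \<epsilon> * X + of_real C * of_real Y"
        unfolding X_def Y_def by (simp only: finner_add_right finner_smult_right finner_diagonal)
      have "Im X = 0"
        using finner_piop_hermitian_real[OF Bset_fin_supp[OF s] hs u] unfolding X_def
        by (metis cnj.simps(2) complex_cnj_cancel_iff neg_equal_zero)
      moreover have "\<bar>\<epsilon> * Re X\<bar> \<le> C * Y"
        using abs_Re_le_cmod[of X] bound[OF u] eps by (simp add: X_def Y_def abs_mult)
      ultimately show ?thesis unfolding eq by (simp add: less_eq_complex_def)
    qed
    moreover have "?f \<in> Bset" by (simp add: Bset_padd Bset_psmult s Bset_Jshift_pow)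
    moreover have "hermitian ?f"
      by (simp add: hermitian_padd hermitian_psmult_real hs hermitian_Jshift_pow[OF h])
    ultimately show ?thesis by (simp add: Bplus_def)
  qed
  thus ?thesis using that e by blast
qed

text \<open>Every state \<open>\<omega>\<close> with \<open>\<omega>((J - \<mu>)\<^sup>2) = 0\<close> annihilates \<open>(J - \<mu>)\<^sup>2\<^sup>e\<close>, so
  \<open>\<pm>\<omega>(s) \<ge> 0\<close> by the previous lemma.\<close>

lemma csupp_Rset_if_vanishes:
  fixes s :: "'i::finite pol"
  assumes h: "0 < h" and mu: "0 \<le> \<mu>" and s: "s \<in> Bset" and hs: "hermitian s"
    and Z: "\<And>u. u \<in> Fock \<Longrightarrow> (\<And>P. u P \<noteq> 0 \<Longrightarrow> h * real (mabs P) = \<mu>) \<Longrightarrow> finner h u (piop h s u) = 0"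
  shows "s \<in> csupp (Rset h \<mu>)"
proof -
  obtain C e where e: "0 < e" and Bplus: "\<And>\<epsilon>. \<bar>\<epsilon>\<bar> = 1 \<Longrightarrow>
      padd (psmult (of_real \<epsilon>) s) (psmult (of_real C) (Jshift_pow h \<mu> (2 * e))) \<in> Bplus h"
    using Bplus_add_Jshift_pow[OF h mu s hs Z] by blast
  have vanish: "\<omega> s = 0" if st: "is_state h \<omega>" and cc: "\<omega> (wick h (Jshift \<mu>) (Jshift \<mu>)) = 0" for \<omega>
  proof -
    obtain n where n: "2 * e = Suc n" using e by (cases "2 * e") auto
    have y0: "\<omega> (Jshift_pow h \<mu> (2 * e)) = 0"
      unfolding n by (rule state_Jshift_pow_eq_0[OF h st cc])
    have "0 \<le> \<omega> (padd (psmult (of_real \<epsilon>) s) (psmult (of_real C) (Jshift_pow h \<mu> (2 * e))))"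
      if "\<bar>\<epsilon>\<bar> = 1" for \<epsilon> by (rule state_nonneg[OF st Bplus[OF that]])
    moreover have "\<omega> (padd (psmult (of_real \<epsilon>) s) (psmult (of_real C) (Jshift_pow h \<mu> (2 * e)))) = of_real \<epsilon> * \<omega> s" for \<epsilon>
      using st s y0 by (simp add: state_padd state_psmult Bset_psmult Bset_Jshift_pow)
    ultimately have "0 \<le> \<omega> s" "0 \<le> - \<omega> s" by (metis abs_1 mult_1 of_real_1, metis abs_neg_one mult_minus1 of_real_1 of_real_minus)
    thus ?thesis by (simp add: antisym)
  qed
  have "s \<in> Rset h \<mu>" unfolding Rset_Jshift
  proof (intro CollectI conjI allI impI s hs)
    fix \<omega> :: "'i pol \<Rightarrow> complex"
    assume "is_state h \<omega> \<and> \<omega> (wick h (Jshift \<mu>) (Jshift \<mu>)) = 0"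
    thus "0 \<le> \<omega> s" using vanish[of \<omega>] by simp
  qed
  moreover have "pneg s \<in> Rset h \<mu>" unfolding Rset_Jshift
  proof (intro CollectI conjI allI impI Bset_pneg[OF s])
    show "hermitian (pneg s)" using hermitian_psmult_real[OF hs, of "-1"] by (simp add: pneg_eq_psmult)
    fix \<omega> :: "'i pol \<Rightarrow> complex"
    assume "is_state h \<omega> \<and> \<omega> (wick h (Jshift \<mu>) (Jshift \<mu>)) = 0"
    thus "0 \<le> \<omega> (pneg s)" using vanish[of \<omega>] s by (auto simp: pneg_eq_psmult state_psmult)
  qed
  moreover have "s = pneg (pneg s)" by (simp add: pneg_def)
  ultimately show ?thesis by (auto simp: csupp_def)
qed

section \<open>Positive semidefinite Hermitian forms are sums of squares\<close>

definition qform :: "'a set \<Rightarrow> ('a \<Rightarrow> 'a \<Rightarrow> complex) \<Rightarrow> ('a \<Rightarrow> complex) \<Rightarrow> complex" where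
  "qform S M x = (\<Sum>P\<in>S. \<Sum>Q\<in>S. cnj (x P) * x Q * M P Q)"

definition hermitian_on :: "'a set \<Rightarrow> ('a \<Rightarrow> 'a \<Rightarrow> complex) \<Rightarrow> bool" where
  "hermitian_on S M \<longleftrightarrow> (\<forall>P\<in>S. \<forall>Q\<in>S. M Q P = cnj (M P Q))"

lemma hermitian_onD: "hermitian_on S M \<Longrightarrow> P \<in> S \<Longrightarrow> Q \<in> S \<Longrightarrow> M Q P = cnj (M P Q)"
  unfolding hermitian_on_def by blast

definition psd_on :: "'a set \<Rightarrow> ('a \<Rightarrow> 'a \<Rightarrow> complex) \<Rightarrow> bool" where
  "psd_on S M \<longleftrightarrow> (\<forall>x. 0 \<le> qform S M x)"

lemma qform_add_delta:
  assumes S: "finite S" and i: "i \<in> S" and herm: "hermitian_on S M"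
  shows "qform S M (\<lambda>R. x R + (if R = i then t else 0)) =
     qform S M x + cnj t * (\<Sum>Q\<in>S. M i Q * x Q) + t * cnj (\<Sum>Q\<in>S. M i Q * x Q) + cnj t * t * M i i"
proof -
  have ci: "cnj (if P = i then t else 0) = (if P = i then cnj t else 0)" for P by simp
  have "qform S M (\<lambda>R. x R + (if R = i then t else 0)) =
     qform S M x + (\<Sum>P\<in>S. \<Sum>Q\<in>S. cnj (x P) * (if Q = i then t else 0) * M P Q)
     + (\<Sum>P\<in>S. \<Sum>Q\<in>S. (if P = i then cnj t else 0) * x Q * M P Q)
     + (\<Sum>P\<in>S. \<Sum>Q\<in>S. (if P = i then cnj t else 0) * (if Q = i then t else 0) * M P Q)"
    unfolding qform_def by (simp only: complex_cnj_add ci sum.distrib[symmetric]) (simp add: algebra_simps)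
  also have "(\<Sum>P\<in>S. \<Sum>Q\<in>S. cnj (x P) * (if Q = i then t else 0) * M P Q) = t * cnj (\<Sum>Q\<in>S. M i Q * x Q)"
  proof -
    have "cnj (x P) * (if Q = i then t else 0) * M P Q = (if Q = i then cnj (x P) * t * M P i else 0)" for P Q
      by simp
    hence "(\<Sum>P\<in>S. \<Sum>Q\<in>S. cnj (x P) * (if Q = i then t else 0) * M P Q) = (\<Sum>P\<in>S. cnj (x P) * t * M P i)"
      using S i by (simp add: sum.delta)
    also have "\<dots> = (\<Sum>P\<in>S. t * cnj (M i P * x P))"
    proof (rule sum.cong[OF refl])
      fix P assume "P \<in> S"
      hence "M P i = cnj (M i P)" by (rule hermitian_onD[OF herm i])
      thus "cnj (x P) * t * M P i = t * cnj (M i P * x P)" by (simp add: mult_ac)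
    qed
    finally show ?thesis by (simp add: sum_distrib_left cnj_sum)
  qed
  also have "(\<Sum>P\<in>S. \<Sum>Q\<in>S. (if P = i then cnj t else 0) * x Q * M P Q) = cnj t * (\<Sum>Q\<in>S. M i Q * x Q)"
  proof -
    have "(\<Sum>Q\<in>S. (if P = i then cnj t else 0) * x Q * M P Q) = (if P = i then cnj t * (\<Sum>Q\<in>S. M i Q * x Q) else 0)" for P
      by (cases "P = i") (simp_all add: sum_distrib_left mult_ac)
    thus ?thesis using S i by (simp add: sum.delta)
  qed
  also have "(\<Sum>P\<in>S. \<Sum>Q\<in>S. (if P = i then cnj t else 0) * (if Q = i then t else 0) * M P Q) = cnj t * t * M i i"
  proof -
    have "(if P = i then cnj t else 0) * (if Q = i then t else 0) * M P Q
        = (if Q = i then (if P = i then cnj t * t * M i i else 0) else 0)" for P Q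
      by simp
    thus ?thesis using S i by (simp add: sum.delta)
  qed
  finally show ?thesis by (simp add: algebra_simps)
qed

lemma qform_delta:
  assumes "finite S" "Q \<in> S"
  shows "qform S M (\<lambda>R. if R = Q then 1 else 0) = M Q Q"
proof -
  have "cnj (if P = Q then 1 else 0) * (if Q' = Q then 1 else 0) * M P Q'
      = (if Q' = Q then (if P = Q then M Q Q else 0) else 0)" for P Q'
    by auto
  thus ?thesis unfolding qform_def using assms by (simp add: sum.delta)
qed

lemma psd_on_diag_nonneg: "finite S \<Longrightarrow> i \<in> S \<Longrightarrow> psd_on S M \<Longrightarrow> 0 \<le> M i i"
  unfolding psd_on_def by (metis qform_delta)

text \<open>A zero diagonal entry of a positive semidefinite form forces its whole row to vanish:
  otherwise moving \<open>x\<close> along the \<open>i\<close>-th coordinate makes the form negative.\<close>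

lemma psd_on_zero_row:
  assumes S: "finite S" and herm: "hermitian_on S M" and psd: "psd_on S M"
    and i: "i \<in> S" and Mii: "M i i = 0" and Q: "Q \<in> S"
  shows "M i Q = 0"
proof (rule ccontr)
  assume ne: "M i Q \<noteq> 0"
  define \<beta> where "\<beta> = M i Q"
  define e where "e = (\<lambda>R. if R = Q then 1 else (0::complex))"
  have sum_e: "(\<Sum>Q'\<in>S. M i Q' * e Q') = \<beta>" using S Q by (simp add: e_def \<beta>_def if_distrib sum.delta cong: if_cong)
  have q: "0 \<le> M Q Q - of_real (2 * s * (cmod \<beta>)\<^sup>2)" for s :: real
  proof -
    have "0 \<le> qform S M (\<lambda>R. e R + (if R = i then - of_real s * \<beta> else 0))" using psd by (simp add: psd_on_def)
    also have "\<dots> = M Q Q - of_real s * (cnj \<beta> * \<beta>) - of_real s * (cnj \<beta> * \<beta>)"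
      unfolding qform_add_delta[OF S i herm] sum_e Mii unfolding e_def qform_delta[OF S Q]
      by (simp add: mult_ac)
    also have "\<dots> = M Q Q - of_real (2 * s * (cmod \<beta>)\<^sup>2)" by (simp add: cnj_mult_self)
    finally show ?thesis .
  qed
  have b: "(cmod \<beta>)\<^sup>2 > 0" using ne by (simp add: \<beta>_def)
  define s where "s = (Re (M Q Q) + 1) / (2 * (cmod \<beta>)\<^sup>2)"
  have "0 \<le> Re (M Q Q) - 2 * s * (cmod \<beta>)\<^sup>2" using q[of s] by (simp add: less_eq_complex_def)
  also have "2 * s * (cmod \<beta>)\<^sup>2 = Re (M Q Q) + 1" using b by (simp add: s_def)
  finally show False by simp
qed

lemma qform_insert_zero_row:
  assumes S: "finite S" "i \<notin> S" and z: "\<And>Q. Q \<in> insert i S \<Longrightarrow> M i Q = 0 \<and> M Q i = 0"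
  shows "qform (insert i S) M x = qform S M x"
proof -
  have "qform (insert i S) M x = (\<Sum>Q\<in>insert i S. cnj (x i) * x Q * M i Q) + (\<Sum>P\<in>S. \<Sum>Q\<in>insert i S. cnj (x P) * x Q * M P Q)"
    unfolding qform_def using S by (simp add: sum.insert)
  also have "(\<Sum>Q\<in>insert i S. cnj (x i) * x Q * M i Q) = 0" using z by (intro sum.neutral) auto
  also have "(\<Sum>P\<in>S. \<Sum>Q\<in>insert i S. cnj (x P) * x Q * M P Q) = qform S M x"
    unfolding qform_def
  proof (rule sum.cong[OF refl])
    fix P assume P: "P \<in> S"
    hence "M P i = 0" using z[of P] by simp
    thus "(\<Sum>Q\<in>insert i S. cnj (x P) * x Q * M P Q) = (\<Sum>Q\<in>S. cnj (x P) * x Q * M P Q)"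
      using S by (simp add: sum.insert)
  qed
  finally show ?thesis by simp
qed

lemma sum_upd_zero_mult:
  fixes v x :: "'a \<Rightarrow> complex"
  assumes "finite S" "i \<notin> S"
  shows "(\<Sum>Q\<in>insert i S. (if Q = i then 0 else v Q) * x Q) = (\<Sum>Q\<in>S. v Q * x Q)"
proof -
  have "(\<Sum>Q\<in>S. (if Q = i then 0 else v Q) * x Q) = (\<Sum>Q\<in>S. v Q * x Q)" using assms by (intro sum.cong) auto
  thus ?thesis using assms by simp
qed

lemma psd_on_pivot_zero:
  assumes S: "finite S" "i \<notin> S" and herm: "hermitian_on (insert i S) M" and psd: "psd_on (insert i S) M"
    and Mii: "M i i = 0"
  shows "hermitian_on S M" "psd_on S M" "qform (insert i S) M x = qform S M x"
proof -
  have row: "M i Q = 0" if "Q \<in> insert i S" for Q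
    using psd_on_zero_row[OF _ herm psd _ Mii that] S by simp
  have eq: "qform (insert i S) M x = qform S M x" for x
    using row hermitian_onD[OF herm insertI1] S by (intro qform_insert_zero_row) auto
  show "hermitian_on S M" using herm unfolding hermitian_on_def by blast
  show "psd_on S M" using psd eq by (simp add: psd_on_def)
  show "qform (insert i S) M x = qform S M x" by (rule eq)
qed

definition schur_complement :: "'a \<Rightarrow> ('a \<Rightarrow> 'a \<Rightarrow> complex) \<Rightarrow> 'a \<Rightarrow> 'a \<Rightarrow> complex" where
  "schur_complement i M P Q = M P Q - cnj (M i P) * M i Q / M i i"

lemma qform_schur_complement:
  "qform S (schur_complement i M) x
    = qform S M x - cnj (\<Sum>Q\<in>S. M i Q * x Q) * (\<Sum>Q\<in>S. M i Q * x Q) / M i i"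
proof -
  have "cnj (\<Sum>Q\<in>S. M i Q * x Q) * (\<Sum>Q\<in>S. M i Q * x Q) / M i i
      = (\<Sum>P\<in>S. \<Sum>Q\<in>S. cnj (x P) * x Q * (cnj (M i P) * M i Q / M i i))"
    unfolding cnj_sum sum_product sum_divide_distrib by (intro sum.cong refl) (simp add: mult_ac)
  thus ?thesis unfolding qform_def schur_complement_def by (simp add: right_diff_distrib sum_subtractf)
qed

lemma hermitian_on_schur_complement:
  assumes herm: "hermitian_on S M" and i: "i \<in> S"
  shows "hermitian_on S (schur_complement i M)"
  unfolding hermitian_on_def schur_complement_def
proof (intro ballI)
  fix P Q assume "P \<in> S" "Q \<in> S"
  thus "M Q P - cnj (M i Q) * M i P / M i i = cnj (M P Q - cnj (M i P) * M i Q / M i i)"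
    using hermitian_onD[OF herm \<open>P \<in> S\<close> \<open>Q \<in> S\<close>] hermitian_onD[OF herm i i] by (simp add: mult_ac)
qed

text \<open>One step of Cholesky's algorithm: the Schur complement of a nonzero pivot of a positive
  semidefinite form is positive semidefinite, since it is the minimum of the form over
  the \<open>i\<close>-th coordinate.\<close>

lemma psd_on_schur_complement:
  assumes S: "finite S" and i: "i \<in> S" and herm: "hermitian_on S M" and psd: "psd_on S M"
    and Mii: "M i i \<noteq> 0"
  shows "psd_on S (schur_complement i M)"
  unfolding psd_on_def
proof
  fix x
  define \<alpha> where "\<alpha> = (\<Sum>Q\<in>S. M i Q * x Q)"
  have real: "cnj (M i i) = M i i" using hermitian_onD[OF herm i i] by simp
  have "0 \<le> qform S M (\<lambda>R. x R + (if R = i then - \<alpha> / M i i else 0))" using psd by (simp add: psd_on_def)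
  also have "\<dots> = qform S M x - cnj \<alpha> * \<alpha> / M i i"
    unfolding qform_add_delta[OF S i herm] \<alpha>_def[symmetric] using Mii real by (simp add: field_simps)
  finally show "0 \<le> qform S (schur_complement i M) x" by (simp add: qform_schur_complement \<alpha>_def)
qed

lemma schur_complement_row_eq_0:
  assumes herm: "hermitian_on S M" and i: "i \<in> S" and Q: "Q \<in> S" and Mii: "M i i \<noteq> 0"
  shows "schur_complement i M i Q = 0 \<and> schur_complement i M Q i = 0"
  using hermitian_onD[OF herm i Q] hermitian_onD[OF herm i i] Mii by (auto simp: schur_complement_def)

lemma psd_on_pivot_nonzero:
  assumes S: "finite S" "i \<notin> S" and herm: "hermitian_on (insert i S) M" and psd: "psd_on (insert i S) M"
    and Mii: "M i i \<noteq> 0"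
  obtains v0 where "hermitian_on S (schur_complement i M)" "psd_on S (schur_complement i M)"
    "\<And>x. qform (insert i S) M x
       = qform S (schur_complement i M) x + of_real ((cmod (\<Sum>Q\<in>insert i S. v0 Q * x Q))\<^sup>2)"
proof -
  let ?T = "insert i S" and ?M' = "schur_complement i M"
  have fT: "finite ?T" using S by simp
  have eq: "qform ?T ?M' x = qform S ?M' x" for x
    using schur_complement_row_eq_0[OF herm insertI1 _ Mii] by (rule qform_insert_zero_row[OF S])
  have "0 \<le> M i i" using psd_on_diag_nonneg[OF fT _ psd] by simp
  then obtain r where r: "M i i = of_real r" "0 < r"
    using Mii by (auto simp: less_eq_complex_def complex_eq_iff intro: that[of "Re (M i i)"])
  define v0 where "v0 Q = M i Q / of_real (sqrt r)" for Q
  have v0: "of_real ((cmod (\<Sum>Q\<in>?T. v0 Q * x Q))\<^sup>2)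
      = cnj (\<Sum>Q\<in>?T. M i Q * x Q) * (\<Sum>Q\<in>?T. M i Q * x Q) / M i i" for x
  proof -
    have "(cmod (\<Sum>Q\<in>?T. v0 Q * x Q))\<^sup>2 = (cmod (\<Sum>Q\<in>?T. M i Q * x Q))\<^sup>2 / r"
      using r by (simp add: v0_def sum_divide_distrib[symmetric] norm_divide power_divide)
    hence "of_real ((cmod (\<Sum>Q\<in>?T. v0 Q * x Q))\<^sup>2)
        = (of_real ((cmod (\<Sum>Q\<in>?T. M i Q * x Q))\<^sup>2) :: complex) / M i i"
      by (simp add: r)
    thus ?thesis by (simp only: cnj_mult_self)
  qed
  show ?thesis
  proof (rule that)
    show "hermitian_on S ?M'"
      using hermitian_on_schur_complement[OF herm insertI1] unfolding hermitian_on_def by blast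
    show "psd_on S ?M'" using psd_on_schur_complement[OF fT insertI1 herm psd Mii] eq by (simp add: psd_on_def)
    show "qform ?T M x = qform S ?M' x + of_real ((cmod (\<Sum>Q\<in>?T. v0 Q * x Q))\<^sup>2)" for x
      unfolding v0 eq[symmetric] qform_schur_complement[of ?T] by simp
  qed
qed

theorem psd_on_sum_of_squares:
  assumes "finite S" "hermitian_on S M" "psd_on S M"
  shows "\<exists>vs. \<forall>x. qform S M x = (\<Sum>v\<leftarrow>vs. of_real ((cmod (\<Sum>Q\<in>S. v Q * x Q))\<^sup>2))"
  using assms
proof (induction S arbitrary: M rule: finite_induct)
  case empty
  show ?case by (rule exI[of _ "[]"]) (simp add: qform_def)
next
  case (insert i S)
  show ?case
  proof (cases "M i i = 0")
    case True
    note pivot = psd_on_pivot_zero[OF insert.hyps insert.prems True]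
    obtain vs where vs: "\<And>x. qform S M x = (\<Sum>v\<leftarrow>vs. of_real ((cmod (\<Sum>Q\<in>S. v Q * x Q))\<^sup>2))"
      using insert.IH[OF pivot(1,2)] by blast
    show ?thesis
      by (rule exI[of _ "map (\<lambda>v. v(i := 0)) vs"])
         (simp add: pivot(3) vs sum_upd_zero_mult[OF insert.hyps] o_def)
  next
    case False
    obtain v0 where herm: "hermitian_on S (schur_complement i M)" and psd: "psd_on S (schur_complement i M)"
      and eq: "\<And>x. qform (insert i S) M x
        = qform S (schur_complement i M) x + of_real ((cmod (\<Sum>Q\<in>insert i S. v0 Q * x Q))\<^sup>2)"
      using psd_on_pivot_nonzero[OF insert.hyps insert.prems False] by blast
    obtain vs where vs: "\<And>x. qform S (schur_complement i M) x
        = (\<Sum>v\<leftarrow>vs. of_real ((cmod (\<Sum>Q\<in>S. v Q * x Q))\<^sup>2))"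
      using insert.IH[OF herm psd] by blast
    show ?thesis
      by (rule exI[of _ "v0 # map (\<lambda>v. v(i := 0)) vs"])
         (simp add: eq vs sum_upd_zero_mult[OF insert.hyps] o_def add.commute)
  qed
qed

section \<open>Compressions to an eigenspace of J\<close>

definition compression :: "real \<Rightarrow> 'i::finite pol \<Rightarrow> 'i mi \<Rightarrow> 'i mi \<Rightarrow> complex" where
  "compression h f P Q = piop h f (monom Q) P * of_real (fock_weight h P)"

lemma finner_piop_eq_qform:
  assumes u: "u \<in> Fock" and S: "finite S" "{P. u P \<noteq> 0} \<subseteq> S"
  shows "finner h u (piop h f u) = qform S (compression h f) u"
proof -
  have "u = (\<lambda>R. \<Sum>Q\<in>S. u Q * monom Q R)"
    using S by (simp add: sum_monom_expansion fun_eq_iff)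
  hence pu: "piop h f u P = (\<Sum>Q\<in>S. u Q * piop h f (monom Q) P)" for P
    by (metis (no_types) piop_sum_vector)
  have "finner h u (piop h f u) = finner_on h S u (piop h f u)"
    by (rule finner_eq_finner_on[OF u S(1)]) (use S(2) in auto)
  also have "\<dots> = qform S (compression h f) u"
    unfolding finner_on_def qform_def compression_def pu by (simp add: sum_distrib_left sum_distrib_right mult_ac)
  finally show ?thesis .
qed

lemma hermitian_on_compression:
  assumes "fin_supp f" "hermitian f"
  shows "hermitian_on S (compression h f)"
  unfolding hermitian_on_def
proof (intro ballI)
  fix P Q
  have "compression h f P Q = finner h (monom P) (piop h f (monom Q))"
    by (simp add: compression_def finner_monom_left)
  also have "\<dots> = finner h (piop h f (monom P)) (monom Q)"
    using finner_piop_adjoint[OF Fock_monom Fock_monom assms(1), of h P Q] assms(2) by (simp add: hermitian_def)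
  also have "\<dots> = cnj (compression h f Q P)"
    by (simp add: finner_commute[OF Fock_monom Fock_piop[OF Fock_monom assms(1)]] compression_def finner_monom_left)
  finally show "compression h f Q P = cnj (compression h f P Q)" by simp
qed

lemma psd_on_compression:
  fixes f :: "'i::finite pol"
  assumes h: "0 < h" and f: "f \<in> Rset h \<mu>" and m: "\<mu> = h * real m"
  shows "psd_on (level m) (compression h f)"
  unfolding psd_on_def
proof
  fix x :: "'i mi \<Rightarrow> complex"
  define u where "u = (\<lambda>R. if R \<in> level m then x R else 0)"
  have uS: "{P. u P \<noteq> 0} \<subseteq> level m" by (auto simp: u_def split: if_splits)
  have u: "u \<in> Fock" using finite_subset[OF uS finite_level] by (simp add: Fock_def)
  have "qform (level m) (compression h f) x = qform (level m) (compression h f) u"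
    unfolding qform_def u_def by (intro sum.cong refl) auto
  also have "\<dots> = finner h u (piop h f u)" by (rule finner_piop_eq_qform[OF u finite_level uS, symmetric])
  also have "0 \<le> \<dots>"
    by (rule Rset_finner_nonneg[OF h f u]) (use uS h in \<open>auto simp: level_def m\<close>)
  finally show "0 \<le> qform (level m) (compression h f) x" .
qed

definition level_point :: "nat \<Rightarrow> 'i::finite mi" where
  "level_point m = (\<lambda>i. if i = (SOME j. True) then m else 0)"

lemma mabs_level_point: "mabs (level_point m) = m"
  by (simp add: mabs_def level_point_def)

text \<open>An element \<open>a\<close> with \<open>\<pi>(a) u = (\<Sum>\<^sub>L v\<^sub>L u\<^sub>L) e\<close> on the \<open>m\<close>-particle space, where \<open>e\<close> is a
  unit vector; hence \<open>\<langle>u, \<pi>(a\<^sup>* \<star> a) u\<rangle> = |\<Sum>\<^sub>L v\<^sub>L u\<^sub>L|\<^sup>2\<close> there.\<close>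

definition rank_one :: "real \<Rightarrow> nat \<Rightarrow> ('i::finite mi \<Rightarrow> complex) \<Rightarrow> 'i pol" where
  "rank_one h m v = (\<lambda>(K, L). if K = level_point m \<and> mabs L = m
     then v L / of_real (h ^ m * real (mfact L) * sqrt (fock_weight h (level_point m :: 'i mi))) else 0)"

lemma rank_one_support: "{p. rank_one h m v p \<noteq> 0} \<subseteq> {level_point m} \<times> level m"
  by (auto simp: rank_one_def level_def split: if_splits)

lemma Bset_rank_one: "rank_one h m v \<in> Bset"
proof -
  have "fin_supp (rank_one h m v)" using finite_subset[OF rank_one_support] finite_level by blast
  moreover have "balanced (rank_one h m v)"
    by (auto simp: balanced_def rank_one_def mabs_level_point split: if_splits)
  ultimately show ?thesis by (simp add: Bset_iff)
qed

lemma piop_rank_one: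
  fixes v :: "'i::finite mi \<Rightarrow> complex"
  assumes h: "0 < h" and lv: "\<And>P. u P \<noteq> 0 \<Longrightarrow> mabs P = m"
  shows "piop h (rank_one h m v) u P = (if P = level_point m
     then (\<Sum>L\<in>level m. v L * u L) / of_real (sqrt (fock_weight h (level_point m :: 'i mi))) else 0)"
proof -
  let ?k = "level_point m :: 'i mi"
  have fin: "finite ({?k} \<times> (level m :: 'i mi set))" by (simp add: finite_level)
  have "piop h (rank_one h m v) u P = (\<Sum>p\<in>{?k} \<times> level m. rank_one h m v p * pi_monom h (fst p) (snd p) u P)"
    by (rule piop_eq_sum_superset[OF fin rank_one_support])
  also have "\<dots> = (\<Sum>L\<in>level m. rank_one h m v (?k, L) * pi_monom h ?k L u P)"
  proof -
    have "{?k} \<times> (level m :: 'i mi set) = Pair ?k ` level m" by auto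
    thus ?thesis by (simp add: sum.reindex inj_on_def)
  qed
  also have "\<dots> = (\<Sum>L\<in>level m. if P = ?k then v L * u L / of_real (sqrt (fock_weight h ?k)) else 0)"
  proof (rule sum.cong[OF refl])
    fix L :: "'i mi" assume "L \<in> level m"
    hence mL: "mabs L = m" by (simp add: level_def)
    show "rank_one h m v (?k, L) * pi_monom h ?k L u P = (if P = ?k then v L * u L / of_real (sqrt (fock_weight h ?k)) else 0)"
    proof (cases "P = ?k")
      case True
      have "pi_monom h ?k L u P = of_real (h ^ m * real (mfact L)) * u L"
        using True by (simp add: pi_monom_apply mL mfact_def)
      moreover have "h ^ m * real (mfact L) \<noteq> 0" using h by (simp add: mfact_def)
      ultimately show ?thesis using True h by (simp add: rank_one_def mL field_simps)
    next
      case False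
      have "pi_monom h ?k L u P = 0"
      proof (cases "?k \<le> P")
        case True
        hence "P - ?k \<noteq> 0" using False by (auto simp: fun_eq_iff le_fun_def intro: le_antisym)
        hence "mabs (P - ?k + L) \<noteq> m" using mL by (simp add: mabs_add mabs_eq_0_iff)
        thus ?thesis using True lv by (auto simp: pi_monom_apply)
      qed (simp add: pi_monom_apply)
      thus ?thesis using False by simp
    qed
  qed
  also have "\<dots> = (if P = ?k then (\<Sum>L\<in>level m. v L * u L) / of_real (sqrt (fock_weight h ?k)) else 0)"
    by (simp add: sum_divide_distrib)
  finally show ?thesis .
qed

lemma finner_piop_rank_one_square:
  fixes v :: "'i::finite mi \<Rightarrow> complex"
  assumes h: "0 < h" and u: "u \<in> Fock" and lv: "\<And>P. u P \<noteq> 0 \<Longrightarrow> mabs P = m"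
  shows "finner h u (piop h (wick h (pstar (rank_one h m v)) (rank_one h m v)) u)
    = of_real ((cmod (\<Sum>L\<in>level m. v L * u L))\<^sup>2)"
proof -
  let ?k = "level_point m :: 'i mi"
  define z where "z = (\<Sum>L\<in>level m. v L * u L) / of_real (sqrt (fock_weight h ?k))"
  have w: "piop h (rank_one h m v) u = (\<lambda>P. if P = ?k then z else 0)"
    by (rule ext) (simp add: piop_rank_one[OF h lv] z_def)
  have "finner h u (piop h (wick h (pstar (rank_one h m v)) (rank_one h m v)) u)
      = of_real (\<Sum>P\<in>{P. (if P = ?k then z else 0) \<noteq> 0}. (cmod (if P = ?k then z else 0))\<^sup>2 * fock_weight h P)"
    unfolding finner_piop_square[OF Bset_fin_supp[OF Bset_rank_one] u] w finner_self ..
  also have "(\<Sum>P\<in>{P. (if P = ?k then z else 0) \<noteq> 0}. (cmod (if P = ?k then z else 0))\<^sup>2 * fock_weight h P)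
      = (cmod z)\<^sup>2 * fock_weight h ?k"
    by (cases "z = 0") auto
  also have "\<dots> = (cmod (\<Sum>L\<in>level m. v L * u L))\<^sup>2"
    using fock_weight_pos[OF h, of ?k] by (simp add: z_def norm_divide power_divide)
  finally show ?thesis .
qed

lemma vector_on_empty_level_eq_0:
  assumes "\<not> (\<exists>m::nat. \<mu> = h * real m)" and "\<And>P. u P \<noteq> 0 \<Longrightarrow> h * real (mabs P) = \<mu>"
  shows "u = (\<lambda>_. 0)"
  using assms by (metis ext)

text \<open>The compression of \<open>\<pi>(f)\<close> to the \<open>m\<close>-particle space is positive semidefinite; its
  Cholesky decomposition is realized by a sum of squares of rank-one elements.\<close>

theorem Rset_compression_sum_squares:
  fixes f :: "'i::finite pol"
  assumes h: "0 < h" and f: "f \<in> Rset h \<mu>"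
  obtains p where "p \<in> Bpp h" "\<And>u. u \<in> Fock \<Longrightarrow> (\<And>P. u P \<noteq> 0 \<Longrightarrow> h * real (mabs P) = \<mu>) \<Longrightarrow>
           finner h u (piop h p u) = finner h u (piop h f u)"
proof (cases "\<exists>m::nat. \<mu> = h * real m")
  case False
  show ?thesis
  proof (rule that)
    show "sum_squares h [] \<in> Bpp h" unfolding Bpp_iff by (intro exI[of _ "[]"]) simp
    fix u :: "'i fock" assume "\<And>P. u P \<noteq> 0 \<Longrightarrow> h * real (mabs P) = \<mu>"
    hence "u = (\<lambda>_. 0)" by (rule vector_on_empty_level_eq_0[OF False])
    thus "finner h u (piop h (sum_squares h []) u) = finner h u (piop h f u)" by (simp add: finner_def)
  qed
next
  case True
  then obtain m :: nat where m: "\<mu> = h * real m" by blast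
  have fB: "f \<in> Bset" "hermitian f" using f by (auto simp: Rset_def)
  obtain vs where vs: "\<And>x. qform (level m) (compression h f) x = (\<Sum>v\<leftarrow>vs. of_real ((cmod (\<Sum>Q\<in>level m. v Q * x Q))\<^sup>2))"
    using psd_on_sum_of_squares[OF finite_level hermitian_on_compression[OF Bset_fin_supp[OF fB(1)] fB(2)]
        psd_on_compression[OF h f m]] by blast
  define as where "as = map (rank_one h m) vs"
  have asB: "set as \<subseteq> Bset" by (auto simp: as_def Bset_rank_one)
  have "finner h u (piop h (sum_squares h as) u) = finner h u (piop h f u)"
    if u: "u \<in> Fock" and lv: "\<And>P. u P \<noteq> 0 \<Longrightarrow> h * real (mabs P) = \<mu>" for u
  proof -
    have lv': "\<And>P. u P \<noteq> 0 \<Longrightarrow> mabs P = m" using lv h by (simp add: m)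
    have uS: "{P. u P \<noteq> 0} \<subseteq> level m" using lv' by (auto simp: level_def)
    have "finner h u (piop h (sum_squares h as) u) = (\<Sum>a\<leftarrow>as. finner h u (piop h (wick h (pstar a) a) u))"
      by (rule finner_piop_sum_squares[OF asB])
    also have "\<dots> = (\<Sum>v\<leftarrow>vs. of_real ((cmod (\<Sum>Q\<in>level m. v Q * u Q))\<^sup>2))"
      unfolding as_def by (simp add: o_def finner_piop_rank_one_square[OF h u lv'])
    also have "\<dots> = qform (level m) (compression h f) u" by (rule vs[symmetric])
    also have "\<dots> = finner h u (piop h f u)" by (rule finner_piop_eq_qform[OF u finite_level uS, symmetric])
    finally show ?thesis .
  qed
  moreover have "sum_squares h as \<in> Bpp h" using asB by (auto simp: Bpp_iff)
  ultimately show ?thesis by (rule that[rotated])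
qed

lemma diff_sum_squares_csupp_Rset:
  fixes f :: "'i::finite pol"
  assumes h: "0 < h" and mu: "0 \<le> \<mu>" and f: "f \<in> Rset h \<mu>" and p: "p \<in> Bpp h"
    and same: "\<And>u. u \<in> Fock \<Longrightarrow> (\<And>P. u P \<noteq> 0 \<Longrightarrow> h * real (mabs P) = \<mu>) \<Longrightarrow>
        finner h u (piop h p u) = finner h u (piop h f u)"
  shows "padd f (psmult (-1) p) \<in> csupp (Rset h \<mu>)"
proof (rule csupp_Rset_if_vanishes[OF h mu])
  have pB: "p \<in> Bset" "hermitian p" using Bpp_subset_Bplus[OF h] p by (auto simp: Bplus_def)
  have fB: "f \<in> Bset" "hermitian f" using f by (auto simp: Rset_def)
  show "padd f (psmult (-1) p) \<in> Bset" "hermitian (padd f (psmult (-1) p))"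
    using fB pB hermitian_psmult_real[OF pB(2), of "-1"] by (simp_all add: Bset_padd Bset_psmult hermitian_padd)
  fix u :: "'i fock" assume "u \<in> Fock" "\<And>P. u P \<noteq> 0 \<Longrightarrow> h * real (mabs P) = \<mu>"
  moreover have "piop h (padd f (psmult (-1) p)) u = (\<lambda>P. piop h f u P + (-1) * piop h p u P)"
    using fB pB by (simp add: fun_eq_iff piop_padd piop_psmult fin_supp_psmult Bset_fin_supp)
  ultimately show "finner h u (piop h (padd f (psmult (-1) p)) u) = 0"
    using same by (simp only: finner_add_right finner_smult_right) simp
qed

theorem proposition4p8:
  fixes h \<mu> :: real
  assumes "0 < h" and "0 \<le> \<mu>"
  shows "(Rset h \<mu> :: 'i::finite pol set) = setsum (Bpp h) (csupp (Rset h \<mu>))"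
proof
  show "setsum (Bpp h) (csupp (Rset h \<mu>)) \<subseteq> (Rset h \<mu> :: 'i pol set)"
    by (rule setsum_Bpp_csupp_subset_Rset[OF assms(1)])
  show "(Rset h \<mu> :: 'i pol set) \<subseteq> setsum (Bpp h) (csupp (Rset h \<mu>))"
  proof
    fix f :: "'i pol" assume f: "f \<in> Rset h \<mu>"
    then obtain p where p: "p \<in> Bpp h" and same: "\<And>u. u \<in> Fock \<Longrightarrow> (\<And>P. u P \<noteq> 0 \<Longrightarrow> h * real (mabs P) = \<mu>) \<Longrightarrow>
        finner h u (piop h p u) = finner h u (piop h f u)"
      using Rset_compression_sum_squares[OF assms(1)] by blast
    have "padd f (psmult (-1) p) \<in> csupp (Rset h \<mu>)"
      by (rule diff_sum_squares_csupp_Rset[OF assms f p same])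
    moreover have "f = padd p (padd f (psmult (-1) p))" by (simp add: padd_def psmult_def fun_eq_iff)
    ultimately show "f \<in> setsum (Bpp h) (csupp (Rset h \<mu>))" using p by (auto simp: setsum_def)
  qed
qed

end
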